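(* Let $\mu_0$ satisfy Assumptions A and B(b), and suppose in addition that $x^*$ is the rightmost point of $\operatorname{supp}(\mu_0)$. Let $0<\tau\le\tau_{\mathrm{crit}}$ and $x^*_\tau=x^*+\tau\int\frac{d\mu_0(s)}{x^*-s}$. Then the density $\psi_\tau$ of $\mu_\tau=\mu_0\boxplus\lambda_\tau$ satisfies $\psi_\tau(x)=0$ for all $x>x^*_\tau$.
   Context: Assumption A: $\mu_0$ is a Borel probability measure on $\mathbb R$ with compact support and a continuous density $\psi_0$. Assumption B(b): there exist $x^*\in\operatorname{supp}(\mu_0)$, $c_0>0$, an integer $k\ge1$, a function $h$ real analytic near $x^*$ with $h(x^* )=1$ and $\epsilon>0$ with $\psi_0(s)=c_0^{2k+3/2}(x^*-s)^{2k+1/2}h(s)$ on $[x^*-\epsilon,x^*]$ and $\psi_0=0$ on $[x^*,x^*+\epsilon]$. $\lambda_\tau$ is the semicircle law with density $\frac{1}{2\pi\tau}\sqrt{4\tau-s^2}$ on $[-2\sqrt\tau,2\sqrt\tau]$, $\boxplus$ is free additive convolution, and $\tau_{\mathrm{crit}}=\left[\int\frac{d\mu_0(s)}{(x^*-s)^2}\right]^{-1}$. *)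

theory Defs
  imports "HOL-Analysis.Analysis" "HOL-Probability.Probability"
begin

definition measure_support :: "real measure \<Rightarrow> real set" where
  "measure_support M = {x. \<forall>e>0. emeasure M (ball x e) > 0}"

definition compact_prob :: "real measure \<Rightarrow> bool" where
  "compact_prob M \<longleftrightarrow> prob_space M \<and> sets M = sets borel \<and> compact (measure_support M)"

definition cauchy_transform :: "real measure \<Rightarrow> complex \<Rightarrow> complex" where
  "cauchy_transform M z = (\<integral>s. 1 / (z - complex_of_real s) \<partial>M)"

definition R_transform_on :: "real measure \<Rightarrow> (complex \<Rightarrow> complex) \<Rightarrow> real \<Rightarrow> bool" where
  "R_transform_on M R e \<longleftrightarrow> e > 0 \<and> R holomorphic_on ball 0 e \<and>
     (\<forall>w \<in> ball 0 e - {0}. cauchy_transform M (R w + 1 / w) = w)"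

definition is_free_add_conv :: "real measure \<Rightarrow> real measure \<Rightarrow> real measure \<Rightarrow> bool" where
  "is_free_add_conv \<rho> \<mu> \<nu> \<longleftrightarrow> compact_prob \<rho> \<and>
     (\<exists>e R\<^sub>\<mu> R\<^sub>\<nu> R\<^sub>\<rho>. R_transform_on \<mu> R\<^sub>\<mu> e \<and> R_transform_on \<nu> R\<^sub>\<nu> e \<and>
        R_transform_on \<rho> R\<^sub>\<rho> e \<and> (\<forall>w \<in> ball 0 e. R\<^sub>\<rho> w = R\<^sub>\<mu> w + R\<^sub>\<nu> w))"

definition semicircle :: "real \<Rightarrow> real measure" where
  "semicircle \<tau> = density lborel (\<lambda>s. ennreal (indicator {-2 * sqrt \<tau> .. 2 * sqrt \<tau>} s *
       sqrt (4 * \<tau> - s\<^sup>2) / (2 * pi * \<tau>)))"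

definition real_analytic_near :: "(real \<Rightarrow> real) \<Rightarrow> real \<Rightarrow> bool" where
  "real_analytic_near h x \<longleftrightarrow> (\<exists>\<delta>>0. \<exists>a::nat \<Rightarrow> real.
      \<forall>s \<in> ball x \<delta>. (\<lambda>n. a n * (s - x) ^ n) sums h s)"

end

theory Submission
  imports Defs "HOL-Complex_Analysis.Complex_Analysis"
begin

text \<open>Write \<open>G\<^sub>0\<close>, \<open>G\<^sub>\<tau>\<close> for the Cauchy transforms of \<open>\<mu>\<^sub>0\<close>, \<open>\<mu>\<^sub>\<tau>\<close> and put
  \<open>F(z) = z + \<tau> G\<^sub>0(z)\<close>. Since R-transforms add and the semicircle law has R-transform
  \<open>\<tau> w\<close>, inverting the Cauchy transforms near infinity gives the subordination identity
  \<open>G\<^sub>\<tau>(F(u)) = G\<^sub>0(u)\<close> for large real \<open>u\<close>, and by analytic continuation for all \<open>z\<close> with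
  \<open>Re z > x\<^sup>*\<close>, \<open>Im z > 0\<close>. On that quarter plane
  \<open>Im F(z) = Im z (1 - \<tau> \<integral> |z - s|\<^sup>-\<^sup>2 d\<mu>\<^sub>0(s))\<close> has the sign of \<open>Im z\<close>, because
  \<open>\<tau> \<le> \<tau>\<^sub>c\<^sub>r\<^sub>i\<^sub>t\<close>.

  On the half line \<open>u > x\<^sup>*\<close>, \<open>F\<close> is real, continuous, at least \<open>u\<close>, and below any
  \<open>x > x\<^sup>*\<^sub>\<tau>\<close> near \<open>x\<^sup>*\<close>; so every such \<open>x\<close> is some \<open>F(u)\<close>. By the open mapping
  theorem, points \<open>w\<close> of the upper half plane near \<open>x\<close> are values \<open>F(z)\<close> with \<open>z\<close> near
  \<open>u\<close>, hence \<open>Im G\<^sub>\<tau>(w) = Im G\<^sub>0(z) \<rightarrow> Im G\<^sub>0(u) = 0\<close>. The Poisson-kernel bound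
  \<open>\<mu>[x - y, x + y] \<le> -2y Im G(x + iy)\<close> then shows that \<open>\<mu>\<^sub>\<tau>\<close> has no mass on
  \<open>(x\<^sup>*\<^sub>\<tau>, \<infinity>)\<close>.\<close>

section \<open>Supports\<close>

lemma AE_in_measure_support:
  fixes M :: "real measure"
  assumes "sets M = sets borel"
  shows "AE x in M. x \<in> measure_support M"
proof -
  define F where "F = {ball x e | x e. e > 0 \<and> emeasure M (ball x e) = 0}"
  have "\<And>S. S \<in> F \<Longrightarrow> open S"
    by (auto simp: F_def)
  then obtain F' where F': "F' \<subseteq> F" "countable F'" "\<Union>F' = \<Union>F"
    using Lindelof by metis
  have "(\<Union>S\<in>F'. S) \<in> null_sets M"
  proof (rule null_sets_UN')
    fix S assume "S \<in> F'"
    then obtain x e where "S = ball x e" "emeasure M (ball x e) = 0"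
      using F' by (auto simp: F_def)
    then show "S \<in> null_sets M"
      using assms by (auto intro: null_setsI)
  qed fact
  then have "AE x in M. x \<notin> (\<Union>S\<in>F'. S)"
    by (rule AE_not_in)
  then have "AE x in M. x \<notin> \<Union>F"
    using F'(3) by simp
  then show ?thesis
  proof (rule eventually_mono)
    fix x assume "x \<notin> \<Union>F"
    then have "emeasure M (ball x e) \<noteq> 0" if "e > 0" for e
      using that centre_in_ball[of x e] unfolding F_def by blast
    then show "x \<in> measure_support M"
      unfolding measure_support_def by (simp add: zero_less_iff_neq_zero)
  qed
qed

lemma compact_prob_AE_bounded:
  assumes "compact_prob M"
  obtains B where "B > 0" "AE x in M. \<bar>x\<bar> \<le> B"
proof -
  have sets: "sets M = sets borel" and compact: "compact (measure_support M)"
    using assms unfolding compact_prob_def by auto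
  obtain B where "B > 0" "\<And>x. x \<in> measure_support M \<Longrightarrow> norm x \<le> B"
    using compact_imp_bounded[OF compact] unfolding bounded_pos by auto
  moreover have "AE x in M. \<bar>x\<bar> \<le> B"
    using AE_in_measure_support[OF sets] by (rule eventually_mono) (use calculation in auto)
  ultimately show ?thesis using that by blast
qed

lemma AE_less_of_density_support_le:
  assumes M: "M = density lborel (\<lambda>s. ennreal (f s))"
    and [measurable]: "f \<in> borel_measurable borel"
    and support: "\<forall>y \<in> measure_support M. y \<le> a"
  shows "AE s in M. s < a"
proof -
  have sets: "sets M = sets borel"
    by (simp add: M)
  have density_measurable: "(\<lambda>s. ennreal (f s)) \<in> borel_measurable lborel"
    by measurable
  have "AE s in M. s \<le> a"
    using AE_in_measure_support[OF sets] by (rule eventually_mono) (use support in auto)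
  moreover have "AE s in M. s \<noteq> a"
    unfolding M AE_density[OF density_measurable]
    using AE_lborel_singleton[of a] by (rule eventually_mono) auto
  ultimately show ?thesis by eventually_elim auto
qed

section \<open>Cauchy transforms\<close>

lemma (in finite_measure) norm_integral_le_const_measure:
  fixes f :: "'a \<Rightarrow> 'b::{banach,second_countable_topology}"
  assumes "AE x in M. norm (f x) \<le> B" "0 \<le> B"
  shows "norm (integral\<^sup>L M f) \<le> B * measure M (space M)"
proof -
  have "norm (integral\<^sup>L M f) \<le> (\<integral>x. norm (f x) \<partial>M)"
    by (rule integral_norm_bound)
  also have "\<dots> \<le> (\<integral>x. B \<partial>M)"
    using assms by (intro integral_mono_AE') (auto elim: eventually_mono)
  finally show ?thesis by (simp add: mult.commute)
qed

lemma cauchy_transform_of_real: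
  "cauchy_transform M (of_real u) = of_real (\<integral>s. 1 / (u - s) \<partial>M)"
proof -
  have "cauchy_transform M (of_real u) = (\<integral>s. complex_of_real (1 / (u - s)) \<partial>M)"
    unfolding cauchy_transform_def by simp
  also have "\<dots> = of_real (\<integral>s. 1 / (u - s) \<partial>M)"
    by (rule integral_complex_of_real)
  finally show ?thesis .
qed

lemma integrable_cauchy_kernel:
  fixes M :: "real measure"
  assumes "finite_measure M" and [measurable_cong]: "sets M = sets borel" and d: "d > 0"
    and far: "AE s in M. d \<le> cmod (z - of_real s)"
  shows "integrable M (\<lambda>s. 1 / (z - of_real s) ^ n)"
proof -
  interpret finite_measure M by fact
  show ?thesis
  proof (rule integrable_const_bound[where B="1 / d ^ n"])
    show "AE s in M. norm (1 / (z - of_real s) ^ n) \<le> 1 / d ^ n"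
      using far
    proof (rule eventually_mono)
      fix s assume "d \<le> cmod (z - of_real s)"
      then have "d ^ n \<le> cmod (z - of_real s) ^ n"
        using d by (intro power_mono) auto
      then show "norm (1 / (z - of_real s) ^ n) \<le> 1 / d ^ n"
        using d by (simp add: norm_divide norm_power frac_le)
    qed
  qed measurable
qed

lemma cauchy_transform_difference_quotient_bound:
  fixes M :: "real measure"
  assumes "finite_measure M" and [measurable_cong]: "sets M = sets borel" and d: "d > 0"
    and z: "z \<noteq> z0" and far: "AE s in M. d \<le> cmod (z0 - of_real s) \<and> d / 2 \<le> cmod (z - of_real s)"
  shows "cmod ((cauchy_transform M z - cauchy_transform M z0) / (z - z0)
      + (\<integral>s. 1 / (z0 - of_real s)^2 \<partial>M)) \<le> 2 / d^3 * measure M (space M) * cmod (z - z0)"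
proof -
  interpret finite_measure M by fact
  have integrable_z: "integrable M (\<lambda>s. 1 / (z - of_real s) ^ 1)"
    using d far by (intro integrable_cauchy_kernel[OF assms(1,2), where d="d / 2"]) (auto elim: eventually_mono)
  have integrable_z0: "integrable M (\<lambda>s. 1 / (z0 - of_real s) ^ n)" for n
    using d far by (intro integrable_cauchy_kernel[OF assms(1,2), where d=d]) (auto elim: eventually_mono)
  have "(cauchy_transform M z - cauchy_transform M z0) / (z - z0)
        + (\<integral>s. 1 / (z0 - of_real s)^2 \<partial>M)
      = (\<integral>s. (1 / (z - of_real s) - 1 / (z0 - of_real s)) / (z - z0) + 1 / (z0 - of_real s)^2 \<partial>M)"
    unfolding cauchy_transform_def using integrable_z integrable_z0[of 1] integrable_z0[of 2]
    by (simp add: integral_diff integral_add integrable_diff)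
  also have "\<dots> = (\<integral>s. (z - z0) / ((z - of_real s) * (z0 - of_real s)^2) \<partial>M)"
  proof (rule integral_cong_AE)
    have identity: "(1 / a - 1 / b) / c + 1 / b^2 = c / (a * b^2)"
      if "a \<noteq> 0" "b \<noteq> 0" "c \<noteq> 0" "a - b = c" for a b c :: complex
    proof -
      have "a - b \<noteq> 0"
        using that by simp
      then show ?thesis
        unfolding that(4)[symmetric] using that(1,2) by (simp add: field_simps power2_eq_square)
    qed
    show "AE s in M. (1 / (z - of_real s) - 1 / (z0 - of_real s)) / (z - z0) + 1 / (z0 - of_real s)^2
        = (z - z0) / ((z - of_real s) * (z0 - of_real s)^2)"
      using far by (rule eventually_mono) (rule identity, use d z in auto)
  qed (measurable, measurable)
  also have "cmod \<dots> \<le> (cmod (z - z0) * (2 / d^3)) * measure M (space M)"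
  proof (rule norm_integral_le_const_measure)
    show "AE s in M. cmod ((z - z0) / ((z - of_real s) * (z0 - of_real s)^2)) \<le> cmod (z - z0) * (2 / d^3)"
      using far
    proof (rule eventually_mono)
      fix s assume s: "d \<le> cmod (z0 - of_real s) \<and> d / 2 \<le> cmod (z - of_real s)"
      then have "d / 2 * d^2 \<le> cmod (z - of_real s) * cmod (z0 - of_real s)^2"
        using d by (intro mult_mono power_mono) auto
      then have "d^3 / 2 \<le> cmod ((z - of_real s) * (z0 - of_real s)^2)"
        by (simp add: norm_mult norm_power power3_eq_cube power2_eq_square)
      then have "cmod (z - z0) / cmod ((z - of_real s) * (z0 - of_real s)^2) \<le> cmod (z - z0) / (d^3 / 2)"
        using d by (intro frac_le) auto
      then show "cmod ((z - z0) / ((z - of_real s) * (z0 - of_real s)^2)) \<le> cmod (z - z0) * (2 / d^3)"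
        by (simp add: norm_divide)
    qed
  qed (use d in simp)
  finally show ?thesis
    by (simp add: mult_ac)
qed

lemma cauchy_transform_has_field_derivative:
  assumes "finite_measure M" and "sets M = sets borel"
    and K: "closed K" "K \<noteq> {}" and AE: "AE s in M. s \<in> K"
    and z0: "z0 \<notin> complex_of_real ` K"
  shows "(cauchy_transform M has_field_derivative - (\<integral>s. 1 / (z0 - of_real s)^2 \<partial>M)) (at z0)"
proof -
  define d where "d = infdist z0 (complex_of_real ` K)"
  have "closed (complex_of_real ` K)"
    using K(1) by (intro closed_injective_linear_image) (auto simp: inj_def)
  then have d: "d > 0"
    unfolding d_def using K(2) z0 by (intro infdist_pos_not_in_closed) auto
  have far: "AE s in M. d \<le> cmod (z0 - of_real s) \<and> d / 2 \<le> cmod (z - of_real s)"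
    if z: "cmod (z - z0) < d / 2" for z
    using AE
  proof (rule eventually_mono)
    fix s assume "s \<in> K"
    then have "d \<le> cmod (z0 - of_real s)"
      unfolding d_def using infdist_le[of "of_real s" "complex_of_real ` K" z0]
      by (auto simp: dist_norm)
    moreover have "cmod (z0 - of_real s) \<le> cmod (z - of_real s) + cmod (z - z0)"
      using norm_triangle_ineq4[of "z - of_real s" "z - z0"] by simp
    ultimately show "d \<le> cmod (z0 - of_real s) \<and> d / 2 \<le> cmod (z - of_real s)"
      using z by linarith
  qed
  show ?thesis
    unfolding has_field_derivative_iff
  proof (subst Lim_null, rule Lim_null_comparison)
    show "\<forall>\<^sub>F z in at z0. cmod ((cauchy_transform M z - cauchy_transform M z0) / (z - z0)
        - - (\<integral>s. 1 / (z0 - of_real s)^2 \<partial>M)) \<le> 2 / d^3 * measure M (space M) * cmod (z - z0)"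
      unfolding eventually_at using d cauchy_transform_difference_quotient_bound[OF assms(1,2) d _ far]
      by (intro exI[of _ "d / 2"]) (auto simp: dist_norm)
    show "((\<lambda>z. 2 / d^3 * measure M (space M) * cmod (z - z0)) \<longlongrightarrow> 0) (at z0)"
      by (rule tendsto_eq_intros refl | simp)+
  qed
qed

lemma cauchy_transform_holomorphic:
  assumes "finite_measure M" "sets M = sets borel" "closed K" "K \<noteq> {}" "AE s in M. s \<in> K"
  shows "cauchy_transform M holomorphic_on - (complex_of_real ` K)"
proof -
  have "closed (complex_of_real ` K)"
    using assms(3) by (intro closed_injective_linear_image) (auto simp: inj_def)
  then have "open (- complex_of_real ` K)"
    by blast
  then show ?thesis
    unfolding holomorphic_on_open[OF \<open>open _\<close>]
    using cauchy_transform_has_field_derivative[OF assms] by blast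
qed

lemma norm_kernel_ratio_sub_1_le:
  fixes z1 z2 :: complex and s B :: real
  assumes "B > 0" "\<bar>s\<bar> \<le> B" "8 * B \<le> cmod z1" "8 * B \<le> cmod z2"
  shows "cmod (z1 * z2 / ((z1 - of_real s) * (z2 - of_real s)) - 1) \<le> 1 / 2"
proof -
  define x y where "x = cmod z1" and "y = cmod z2"
  have d1: "x - B \<le> cmod (z1 - of_real s)"
    using norm_triangle_ineq2[of z1 "of_real s"] assms(2) unfolding x_def by simp
  have d2: "y - B \<le> cmod (z2 - of_real s)"
    using norm_triangle_ineq2[of z2 "of_real s"] assms(2) unfolding y_def by simp
  have xy: "x - B > 0" "y - B > 0"
    using assms unfolding x_def y_def by auto
  have nonzero: "(z1 - of_real s) * (z2 - of_real s) \<noteq> 0"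
    using d1 d2 xy by auto
  have "z1 * z2 / ((z1 - of_real s) * (z2 - of_real s)) - 1
      = (of_real s * (z1 + z2) - (of_real s)^2) / ((z1 - of_real s) * (z2 - of_real s))"
    using nonzero by (simp add: field_simps power2_eq_square)
  then have "cmod (z1 * z2 / ((z1 - of_real s) * (z2 - of_real s)) - 1)
      = cmod (of_real s * (z1 + z2) - (of_real s)^2) / cmod ((z1 - of_real s) * (z2 - of_real s))"
    by (simp add: norm_divide)
  also have "\<dots> \<le> (B * (x + y) + B^2) / ((x - B) * (y - B))"
  proof (rule frac_le)
    have "cmod (of_real s * (z1 + z2) - (of_real s)^2) \<le> \<bar>s\<bar> * cmod (z1 + z2) + s^2"
      using norm_triangle_ineq4[of "of_real s * (z1 + z2)" "(of_real s)^2"]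
      by (simp add: norm_mult norm_power)
    also have "\<dots> \<le> B * (x + y) + B^2"
      using assms(1,2) norm_triangle_ineq[of z1 z2] abs_le_square_iff[of s B]
      unfolding x_def y_def by (intro add_mono mult_mono) auto
    finally show "cmod (of_real s * (z1 + z2) - (of_real s)^2) \<le> B * (x + y) + B^2" .
    show "(x - B) * (y - B) \<le> cmod ((z1 - of_real s) * (z2 - of_real s))"
      using d1 d2 xy by (simp add: norm_mult) (intro mult_mono, auto)
  qed (use xy assms(1) in auto)
  also have "\<dots> \<le> 1 / 2"
  proof -
    have "5 * B \<le> x - 3 * B" "5 * B \<le> y - 3 * B"
      using assms unfolding x_def y_def by auto
    then have "(5 * B) * (5 * B) \<le> (x - 3 * B) * (y - 3 * B)"
      using assms(1) by (intro mult_mono) auto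
    then have "2 * (B * (x + y) + B^2) + 15 * B^2 \<le> (x - B) * (y - B)"
      by (simp add: algebra_simps power2_eq_square)
    moreover have "0 \<le> B^2"
      by simp
    ultimately have "2 * (B * (x + y) + B^2) \<le> (x - B) * (y - B)"
      by linarith
    then show ?thesis
      using xy by (simp add: divide_le_eq)
  qed
  finally show ?thesis .
qed

lemma cauchy_transform_diff_eq:
  assumes "finite_measure M" and [measurable_cong]: "sets M = sets borel"
    and AE: "AE s in M. \<bar>s\<bar> \<le> B" and B: "B > 0" and z: "8 * B \<le> cmod z1" "8 * B \<le> cmod z2"
  shows "cauchy_transform M z1 - cauchy_transform M z2
    = (z2 - z1) / (z1 * z2) * (\<integral>s. z1 * z2 / ((z1 - of_real s) * (z2 - of_real s)) \<partial>M)"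
proof -
  interpret finite_measure M by fact
  have far: "7 * B \<le> cmod (z - of_real s)" if "8 * B \<le> cmod z" "\<bar>s\<bar> \<le> B" for z s
    using norm_triangle_ineq2[of z "of_real s"] that by simp
  have integrable_kernel: "integrable M (\<lambda>s. 1 / (z - of_real s))" if "8 * B \<le> cmod z" for z
  proof (rule integrable_const_bound[where B="1 / (7 * B)"])
    show "AE s in M. cmod (1 / (z - of_real s)) \<le> 1 / (7 * B)"
      using AE by (rule eventually_mono) (use far[OF that] B in \<open>simp add: norm_divide divide_le_eq\<close>)
  qed measurable
  have "z1 \<noteq> 0" "z2 \<noteq> 0"
    using z B by auto
  have kernel_difference: "1 / a - 1 / b = (z2 - z1) / (z1 * z2) * (z1 * z2 / (a * b))"
    if "a \<noteq> 0" "b \<noteq> 0" "b - a = z2 - z1" for a b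
  proof -
    have "1 / a - 1 / b = (b - a) / (a * b)"
      using that by (simp add: field_simps)
    then show ?thesis
      unfolding that(3) using that(1,2) \<open>z1 \<noteq> 0\<close> \<open>z2 \<noteq> 0\<close> by simp
  qed
  have "cauchy_transform M z1 - cauchy_transform M z2
      = (\<integral>s. 1 / (z1 - of_real s) - 1 / (z2 - of_real s) \<partial>M)"
    unfolding cauchy_transform_def using integrable_kernel z by (simp add: integral_diff)
  also have "\<dots> = (\<integral>s. (z2 - z1) / (z1 * z2) * (z1 * z2 / ((z1 - of_real s) * (z2 - of_real s))) \<partial>M)"
  proof (rule integral_cong_AE)
    show "AE s in M. 1 / (z1 - of_real s) - 1 / (z2 - of_real s)
        = (z2 - z1) / (z1 * z2) * (z1 * z2 / ((z1 - of_real s) * (z2 - of_real s)))"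
      using AE
    proof (rule eventually_mono)
      fix s assume s: "\<bar>s\<bar> \<le> B"
      have "z1 - of_real s \<noteq> 0" "z2 - of_real s \<noteq> 0"
        using far[OF _ s] z B by fastforce+
      then show "1 / (z1 - of_real s) - 1 / (z2 - of_real s)
          = (z2 - z1) / (z1 * z2) * (z1 * z2 / ((z1 - of_real s) * (z2 - of_real s)))"
        by (intro kernel_difference) auto
    qed
  qed (measurable, measurable)
  also have "\<dots> = (z2 - z1) / (z1 * z2) * (\<integral>s. z1 * z2 / ((z1 - of_real s) * (z2 - of_real s)) \<partial>M)"
    by (rule integral_mult_right_zero)
  finally show ?thesis .
qed

text \<open>The integral in \<open>cauchy_transform_diff_eq\<close> cannot vanish: its integrand has real part
  at least \<open>1/2\<close>.\<close>

lemma cauchy_transform_inj_on_large: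
  assumes "finite_measure M" and [measurable_cong]: "sets M = sets borel"
    and AE: "AE s in M. \<bar>s\<bar> \<le> B" and B: "B > 0" and pos: "measure M (space M) > 0"
  shows "inj_on (cauchy_transform M) {z. 8 * B \<le> cmod z}"
proof (rule inj_onI, rule ccontr)
  interpret finite_measure M by fact
  fix z1 z2 assume z1: "z1 \<in> {z. 8 * B \<le> cmod z}" and z2: "z2 \<in> {z. 8 * B \<le> cmod z}"
    and eq: "cauchy_transform M z1 = cauchy_transform M z2" and ne: "z1 \<noteq> z2"
  define P where "P s = z1 * z2 / ((z1 - of_real s) * (z2 - of_real s))" for s
  have P_bounds: "AE s in M. 1 / 2 \<le> Re (P s) \<and> cmod (P s) \<le> 2"
    using AE
  proof (rule eventually_mono)
    fix s assume s: "\<bar>s\<bar> \<le> B"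
    have "cmod (P s - 1) \<le> 1 / 2"
      unfolding P_def using norm_kernel_ratio_sub_1_le[OF B s] z1 z2 by simp
    moreover have "\<bar>Re (P s - 1)\<bar> \<le> cmod (P s - 1)"
      by (rule abs_Re_le_cmod)
    moreover have "cmod (P s) \<le> cmod (P s - 1) + 1"
      using norm_triangle_ineq2[of "P s" 1] by simp
    ultimately show "1 / 2 \<le> Re (P s) \<and> cmod (P s) \<le> 2"
      by auto
  qed
  have "P \<in> borel_measurable M"
    unfolding P_def by measurable
  then have integrable_P: "integrable M P"
    using P_bounds by (intro integrable_const_bound[where B=2]) (auto elim: eventually_mono)
  define c where "c = (z2 - z1) / (z1 * z2)"
  have "z1 \<noteq> 0" "z2 \<noteq> 0"
    using z1 z2 B by auto
  then have "c \<noteq> 0"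
    unfolding c_def using ne by simp
  have "cauchy_transform M z1 - cauchy_transform M z2 = c * (\<integral>s. P s \<partial>M)"
    unfolding P_def c_def using z1 z2 by (intro cauchy_transform_diff_eq[OF assms(1,2) AE B]) auto
  then have "(\<integral>s. P s \<partial>M) = 0"
    using eq \<open>c \<noteq> 0\<close> by simp
  moreover have "(\<integral>s. 1 / 2 \<partial>M) \<le> (\<integral>s. Re (P s) \<partial>M)"
    using integrable_P P_bounds by (intro integral_mono_AE) (auto elim: eventually_mono)
  ultimately show False
    using pos integrable_P by (simp add: integral_Re[symmetric])
qed

section \<open>Absence of mass where \<open>Im G\<close> vanishes\<close>

lemma measure_Icc_le_Im_cauchy_transform:
  fixes M :: "real measure"
  assumes "finite_measure M" and sets [measurable_cong]: "sets M = sets borel" and y: "y > 0"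
  shows "measure M {x - y..x + y} / (2 * y) \<le> - Im (cauchy_transform M (Complex x y))"
proof -
  interpret finite_measure M by fact
  define f where "f s = y / ((x - s)^2 + y^2)" for s
  have Im_kernel: "Im (1 / (Complex x y - of_real s)) = - f s" for s
    unfolding f_def by (simp add: Im_divide power2_eq_square)
  have f_bound: "\<bar>f s\<bar> \<le> 1 / y" for s
  proof -
    have "0 < ((x - s)^2 + y^2) * y^2"
      using y by (intro mult_pos_pos add_nonneg_pos) auto
    then have "y / ((x - s)^2 + y^2) \<le> y / y^2"
      using y by (intro divide_left_mono) auto
    then show ?thesis
      unfolding f_def using y by (simp add: power2_eq_square)
  qed
  have "f \<in> borel_measurable M"
    unfolding f_def by measurable
  then have integrable_f: "integrable M f"
    using f_bound by (intro integrable_const_bound[where B="1 / y"]) auto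
  have integrable_kernel: "integrable M (\<lambda>s. 1 / (Complex x y - of_real s))"
  proof (rule integrable_const_bound[where B="1 / y"])
    show "AE s in M. cmod (1 / (Complex x y - of_real s)) \<le> 1 / y"
    proof (rule AE_I2)
      fix s
      have "y \<le> cmod (Complex x y - of_real s)"
        using abs_Im_le_cmod[of "Complex x y - of_real s"] y by simp
      then show "cmod (1 / (Complex x y - of_real s)) \<le> 1 / y"
        using y by (simp add: norm_divide divide_le_eq)
    qed
  qed measurable
  have "measure M {x - y..x + y} / (2 * y) = (\<integral>s. indicator {x - y..x + y} s * (1 / (2 * y)) \<partial>M)"
    using sets by simp
  also have "\<dots> \<le> (\<integral>s. f s \<partial>M)"
  proof (rule integral_mono)
    show "integrable M (\<lambda>s. indicator {x - y..x + y} s * (1 / (2 * y)))"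
      by (rule integrable_const_bound[where B="1 / (2 * y)"])
         (use y in \<open>auto intro: AE_I2 simp: indicator_def\<close>, measurable)
    fix s
    show "indicator {x - y..x + y} s * (1 / (2 * y)) \<le> f s"
    proof (cases "s \<in> {x - y..x + y}")
      case True
      then have "(x - s)^2 \<le> y^2"
        using y by (auto simp: abs_le_square_iff[symmetric])
      moreover have "0 < ((x - s)^2 + y^2) * (2 * y^2)"
        using y by (intro mult_pos_pos add_nonneg_pos) auto
      ultimately have "y / (2 * y^2) \<le> f s"
        unfolding f_def using y by (intro divide_left_mono) auto
      then show ?thesis
        using True y by (simp add: power2_eq_square)
    qed (use y in \<open>simp add: f_def\<close>)
  qed (fact integrable_f)
  also have "\<dots> = - Im (cauchy_transform M (Complex x y))"
    unfolding cauchy_transform_def using integrable_kernel by (simp add: integral_Im[symmetric] Im_kernel)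
  finally show ?thesis .
qed

lemma Icc_subset_UN_subintervals:
  fixes c d y :: real and N :: nat
  assumes "c < d" "N \<ge> 1" "y = (d - c) / (2 * N)"
  shows "{c..d} \<subseteq> (\<Union>j<N. {c + 2 * j * y .. c + 2 * (j + 1) * y})"
proof
  fix x assume x: "x \<in> {c..d}"
  have y: "y > 0" and d: "d = c + 2 * N * y"
    using assms by simp_all
  define t where "t = (x - c) / (2 * y)"
  have t: "0 \<le> t" "t \<le> N"
    using x y unfolding t_def d by (auto simp: field_simps)
  show "x \<in> (\<Union>j<N. {c + 2 * j * y .. c + 2 * (j + 1) * y})"
  proof (cases "t = N")
    case True
    then have "x = c + 2 * N * y"
      unfolding t_def using y by (simp add: field_simps)
    moreover have "real (N - 1) + 1 = N"
      using assms by simp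
    ultimately show ?thesis
      using y assms(2) by (intro UN_I[of "N - 1"]) (auto simp: algebra_simps)
  next
    case False
    define j where "j = nat \<lfloor>t\<rfloor>"
    have j: "real j \<le> t" "t < real j + 1" "j < N"
      unfolding j_def using t False by linarith+
    then have "c + 2 * j * y \<le> x" "x \<le> c + 2 * (j + 1) * y"
      using y unfolding t_def by (simp_all add: field_simps)
    then show ?thesis
      using j(3) by auto
  qed
qed

lemma measure_Icc_le_of_local_bound:
  fixes M :: "real measure"
  assumes "finite_measure M" and sets: "sets M = sets borel" and cd: "c < d" and \<epsilon>: "\<epsilon> > 0"
    and local: "\<And>x y. x \<in> {c..d} \<Longrightarrow> 0 < y \<Longrightarrow> y < \<epsilon> \<Longrightarrow> measure M {x - y..x + y} \<le> 2 * y * \<eta>"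
  shows "measure M {c..d} \<le> (d - c) * \<eta>"
proof -
  interpret finite_measure M by fact
  obtain N :: nat where N: "(d - c) / \<epsilon> < N"
    using reals_Archimedean2 by blast
  have "0 < (d - c) / \<epsilon>"
    using cd \<epsilon> by simp
  then have N1: "N \<ge> 1"
    using N by (cases N) auto
  define y where "y = (d - c) / (2 * N)"
  have length: "2 * N * y = d - c"
    unfolding y_def using N1 by simp
  have "d - c < \<epsilon> * N"
    using N \<epsilon> by (simp add: field_simps)
  then have y: "0 < y" "y < \<epsilon>"
    using cd N1 \<epsilon> unfolding y_def by (simp_all add: field_simps)
  define I where "I j = {c + 2 * j * y .. c + 2 * (j + 1) * y}" for j :: nat
  have "measure M {c..d} \<le> measure M (\<Union>j<N. I j)"
    using Icc_subset_UN_subintervals[OF cd N1 y_def] sets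
    by (intro finite_measure_mono) (auto simp: I_def)
  also have "\<dots> \<le> (\<Sum>j<N. measure M (I j))"
  proof (rule finite_measure_subadditive_finite)
    have "I j \<in> sets M" for j
      using sets unfolding I_def by simp
    then show "I ` {..<N} \<subseteq> sets M"
      by blast
  qed simp
  also have "\<dots> \<le> (\<Sum>j<N. 2 * y * \<eta>)"
  proof (rule sum_mono)
    fix j assume "j \<in> {..<N}"
    then have "real j + 1 \<le> N"
      by simp
    then have "(2 * j + 1) * y \<le> 2 * N * y"
      using y(1) by (intro mult_right_mono) auto
    moreover have "0 \<le> (2 * j + 1) * y"
      using y(1) by simp
    ultimately have "c + (2 * j + 1) * y \<in> {c..d}"
      using length by simp
    then have "measure M {c + (2 * j + 1) * y - y .. c + (2 * j + 1) * y + y} \<le> 2 * y * \<eta>"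
      using local y by blast
    then show "measure M (I j) \<le> 2 * y * \<eta>"
      unfolding I_def by (simp add: algebra_simps)
  qed
  also have "\<dots> = (d - c) * \<eta>"
    using length by simp
  finally show ?thesis .
qed

lemma uniform_bound_near_Icc_of_tendsto_0:
  fixes f :: "complex \<Rightarrow> real"
  assumes lim: "\<And>x. x \<in> {c..d} \<Longrightarrow> (f \<longlongrightarrow> 0) (at (of_real x) within {w. 0 < Im w})"
    and \<eta>: "\<eta> > 0"
  obtains \<epsilon> where "\<epsilon> > 0"
    "\<And>x w. x \<in> {c..d} \<Longrightarrow> 0 < Im w \<Longrightarrow> cmod (w - of_real x) < \<epsilon> \<Longrightarrow> \<bar>f w\<bar> < \<eta>"
proof -
  have "\<exists>\<delta>>0. \<forall>w. 0 < Im w \<longrightarrow> cmod (w - of_real x) < \<delta> \<longrightarrow> \<bar>f w\<bar> < \<eta>" if "x \<in> {c..d}" for x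
  proof -
    have "\<forall>\<^sub>F w in at (of_real x) within {w. 0 < Im w}. \<bar>f w\<bar> < \<eta>"
      using lim[OF that] \<eta> by (auto simp: tendsto_iff dist_real_def)
    then obtain \<delta> where "\<delta> > 0" and \<delta>: "\<And>w. 0 < Im w \<Longrightarrow> w \<noteq> of_real x \<Longrightarrow>
        dist w (of_real x) < \<delta> \<Longrightarrow> \<bar>f w\<bar> < \<eta>"
      unfolding eventually_at by auto
    moreover have "w \<noteq> of_real x" if "0 < Im w" for w
      using that by auto
    ultimately show ?thesis
      by (auto simp: dist_norm)
  qed
  then obtain \<delta> where \<delta>: "\<And>x. x \<in> {c..d} \<Longrightarrow> \<delta> x > 0"
    "\<And>x w. x \<in> {c..d} \<Longrightarrow> 0 < Im w \<Longrightarrow> cmod (w - of_real x) < \<delta> x \<Longrightarrow> \<bar>f w\<bar> < \<eta>"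
    by metis
  have "compact (complex_of_real ` {c..d})"
    by (intro compact_continuous_image) (auto intro!: continuous_intros)
  then obtain \<epsilon> where \<epsilon>: "0 < \<epsilon>" "\<And>p. p \<in> complex_of_real ` {c..d} \<Longrightarrow>
      \<exists>G \<in> (\<lambda>x. ball (complex_of_real x) (\<delta> x)) ` {c..d}. ball p \<epsilon> \<subseteq> G"
  proof (rule Heine_Borel_lemma)
    show "complex_of_real ` {c..d} \<subseteq> \<Union> ((\<lambda>x. ball (complex_of_real x) (\<delta> x)) ` {c..d})"
      using \<delta>(1) by force
  qed auto
  moreover have "\<bar>f w\<bar> < \<eta>"
    if x: "x \<in> {c..d}" and w: "0 < Im w" "cmod (w - of_real x) < \<epsilon>" for x w
  proof -
    obtain x' where "x' \<in> {c..d}" "ball (complex_of_real x) \<epsilon> \<subseteq> ball (of_real x') (\<delta> x')"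
      using \<epsilon>(2)[OF imageI[OF x]] by blast
    moreover have "w \<in> ball (complex_of_real x) \<epsilon>"
      using w(2) by (simp add: dist_norm norm_minus_commute)
    ultimately show ?thesis
      using \<delta>(2) w(1) by (auto simp: dist_norm norm_minus_commute)
  qed
  ultimately show ?thesis
    using that by blast
qed

lemma measure_Icc_eq_0_if_Im_cauchy_transform_tendsto_0:
  fixes M :: "real measure"
  assumes "finite_measure M" and sets: "sets M = sets borel" and cd: "c < d"
    and lim: "\<And>x. x \<in> {c..d} \<Longrightarrow>
      ((\<lambda>w. Im (cauchy_transform M w)) \<longlongrightarrow> 0) (at (of_real x) within {w. 0 < Im w})"
  shows "measure M {c..d} = 0"
proof -
  have bound: "measure M {c..d} \<le> (d - c) * \<eta>" if \<eta>: "\<eta> > 0" for \<eta>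
  proof -
    obtain \<epsilon> where \<epsilon>: "\<epsilon> > 0" and small: "\<And>x w. x \<in> {c..d} \<Longrightarrow> 0 < Im w \<Longrightarrow>
        cmod (w - of_real x) < \<epsilon> \<Longrightarrow> \<bar>Im (cauchy_transform M w)\<bar> < \<eta>"
      using uniform_bound_near_Icc_of_tendsto_0[OF lim \<eta>] by blast
    show ?thesis
    proof (rule measure_Icc_le_of_local_bound[OF assms(1) sets cd \<epsilon>])
      fix x y assume x: "x \<in> {c..d}" and y: "0 < y" "y < \<epsilon>"
      have "measure M {x - y..x + y} / (2 * y) \<le> - Im (cauchy_transform M (Complex x y))"
        by (rule measure_Icc_le_Im_cauchy_transform[OF assms(1) sets y(1)])
      also have "\<dots> < \<eta>"
      proof -
        have "Complex x y - of_real x = Complex 0 y"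
          by (simp add: complex_eq_iff)
        then show ?thesis
          using small[OF x, of "Complex x y"] y by (simp add: complex_norm)
      qed
      finally have "measure M {x - y..x + y} < \<eta> * (2 * y)"
        using y by (simp add: pos_divide_less_eq)
      then show "measure M {x - y..x + y} \<le> 2 * y * \<eta>"
        by (simp add: mult_ac)
    qed
  qed
  have "measure M {c..d} \<le> 0 + e" if "e > 0" for e
    using bound[of "e / (d - c)"] that cd by simp
  then show ?thesis
    using measure_nonneg[of M "{c..d}"] by (meson field_le_epsilon order_antisym)
qed

lemma emeasure_greaterThan_eq_0_if_Im_cauchy_transform_tendsto_0:
  fixes M :: "real measure"
  assumes "finite_measure M" and sets: "sets M = sets borel"
    and lim: "\<And>x. x > x0 \<Longrightarrow>
      ((\<lambda>w. Im (cauchy_transform M w)) \<longlongrightarrow> 0) (at (of_real x) within {w. 0 < Im w})"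
  shows "emeasure M {x0<..} = 0"
proof (rule emeasure_eq_0)
  interpret finite_measure M by fact
  define I where "I n = {x0 + 1 / Suc n .. x0 + 2 + n}" for n :: nat
  have "measure M (I n) = 0" for n
    unfolding I_def
  proof (rule measure_Icc_eq_0_if_Im_cauchy_transform_tendsto_0[OF assms(1) sets])
    have "1 / real (Suc n) \<le> 1"
      by simp
    then show "x0 + 1 / Suc n < x0 + 2 + n"
      by linarith
    fix x assume "x \<in> {x0 + 1 / Suc n .. x0 + 2 + n}"
    then have "x0 + 1 / Suc n \<le> x"
      by simp
    moreover have "0 < 1 / real (Suc n)"
      by simp
    ultimately have "x0 < x"
      by linarith
    then show "((\<lambda>w. Im (cauchy_transform M w)) \<longlongrightarrow> 0) (at (of_real x) within {w. 0 < Im w})"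
      by (rule lim)
  qed
  then show "emeasure M (\<Union>n. I n) = 0"
    using sets by (intro emeasure_UN_eq_0) (auto simp: emeasure_eq_measure I_def)
  show "(\<Union>n. I n) \<in> sets M"
    using sets by (auto simp: I_def)
  show "{x0<..} \<subseteq> (\<Union>n. I n)"
  proof
    fix x assume "x \<in> {x0<..}"
    then have "x - x0 > 0"
      by simp
    then obtain n1 where n1: "inverse (real (Suc n1)) < x - x0"
      using reals_Archimedean by blast
    obtain n2 :: nat where n2: "x - x0 \<le> n2"
      using real_arch_simple by blast
    have "1 / real (Suc (max n1 n2)) \<le> 1 / real (Suc n1)"
      by (intro divide_left_mono) auto
    then show "x \<in> (\<Union>n. I n)"
      using n1 n2 unfolding I_def by (intro UN_I[of "max n1 n2"]) (auto simp: inverse_eq_divide)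
  qed
qed

section \<open>The semicircle law\<close>

lemma semicircle_substitution_identity:
  fixes a z s c :: real
  assumes a: "0 < a" and zs: "z - s \<noteq> 0" and c2: "c^2 = z^2 - a^2"
  shows "1 - ((c^2 / (z - s) - z) / a)^2 = c^2 * (a^2 - s^2) / (a^2 * (z - s)^2)"
proof -
  have "(c^2 / (z - s) - z) / a = (c^2 - z * (z - s)) / (a * (z - s))"
    using zs by (simp add: diff_divide_distrib divide_divide_eq_left mult.commute)
  moreover have "1 - (X / Y)^2 = (Y^2 - X^2) / Y^2" if "Y^2 \<noteq> 0" for X Y :: real
    using that by (simp add: field_simps)
  moreover have "(a * (z - s))^2 - (c^2 - z * (z - s))^2 = c^2 * (a^2 - s^2)"
    unfolding c2 by (simp add: algebra_simps power2_eq_square)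
  ultimately show ?thesis
    using a zs by (simp add: power_mult_distrib)
qed

lemma has_real_derivative_arcsin_semicircle_substitution:
  fixes a z c s :: real
  assumes a: "0 < a" and az: "a < z" and c: "c > 0" "c^2 = z^2 - a^2" and s: "-a < s" "s < a"
  shows "((\<lambda>s. arcsin ((c^2 / (z - s) - z) / a)) has_real_derivative c / ((z - s) * sqrt (a^2 - s^2)))
    (at s)"
proof -
  define r where "r = sqrt (a^2 - s^2)"
  have "\<bar>s\<bar>^2 < a^2"
    using s by (intro power_strict_mono) auto
  then have r: "r > 0" "r^2 = a^2 - s^2"
    unfolding r_def by simp_all
  have zs: "z - s > 0"
    using s az by auto
  define g where "g s = (c^2 / (z - s) - z) / a" for s
  have eq: "1 - (g s)^2 = (c * r / (a * (z - s)))^2"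
    unfolding g_def using semicircle_substitution_identity[OF a _ c(2), of s] zs r(2)
    by (simp add: power_mult_distrib power_divide)
  have pos: "c * r / (a * (z - s)) > 0"
    using c r a zs by simp
  have sq: "sqrt (1 - (g s)^2) = c * r / (a * (z - s))"
    unfolding eq real_sqrt_abs using pos by (simp only: abs_of_pos)
  have "(g s)^2 < 1"
    using eq pos by (smt (verit) zero_less_power)
  then have "-1 < g s" "g s < 1"
    by (auto simp: abs_square_less_1)
  then have d: "DERIV arcsin (g s) :> inverse (sqrt (1 - (g s)^2))"
    by (rule DERIV_arcsin)
  have "DERIV (\<lambda>x. c^2 / (z - x)) s :> c^2 / (z - s)^2"
    using zs by (auto intro!: derivative_eq_intros simp: power2_eq_square)
  then have "DERIV (\<lambda>x. (c^2 / (z - x) - z) / a) s :> (c^2 / (z - s)^2 - 0) / a"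
    by (intro DERIV_cdivide DERIV_diff DERIV_const)
  then have l: "(g has_real_derivative c^2 / (a * (z - s)^2)) (at s)"
    unfolding g_def by (rule DERIV_cong) simp
  have "inverse (c * r / (a * u)) * (c^2 / (a * u^2)) = c / (u * r)" if "u > 0" for u
    using c r a that by (simp add: field_simps power2_eq_square)
  then have "inverse (sqrt (1 - (g s)^2)) * (c^2 / (a * (z - s)^2)) = c / ((z - s) * r)"
    unfolding sq using zs by blast
  then show ?thesis
    using DERIV_chain'[OF l d] unfolding g_def r_def by simp
qed

lemma has_real_derivative_semicircle_primitive:
  fixes a z c s :: real
  defines "\<Phi> \<equiv> \<lambda>s. z * arcsin (s / a) - sqrt (a^2 - s^2) - c * arcsin ((c^2 / (z - s) - z) / a)"
  assumes a: "0 < a" and az: "a < z" and c: "c > 0" "c^2 = z^2 - a^2" and s: "-a < s" "s < a"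
  shows "(\<Phi> has_real_derivative sqrt (a^2 - s^2) / (z - s)) (at s)"
proof -
  define r where "r = sqrt (a^2 - s^2)"
  have "\<bar>s\<bar>^2 < a^2"
    using s by (intro power_strict_mono) auto
  then have r: "r > 0" "r^2 = a^2 - s^2"
    unfolding r_def by simp_all
  have zs: "z - s > 0"
    using s az by auto
  have D1: "((\<lambda>s. arcsin (s / a)) has_real_derivative 1 / r) (at s)"
  proof -
    have "-1 < s / a" "s / a < 1"
      using s a by (auto simp: field_simps)
    then have d: "DERIV arcsin (s / a) :> inverse (sqrt (1 - (s / a)^2))"
      by (rule DERIV_arcsin)
    have l: "((\<lambda>s. s / a) has_real_derivative 1 / a) (at s)"
      using a by (auto intro!: derivative_eq_intros)
    have "1 - (s / a)^2 = (a^2 - s^2) / a^2"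
      using a by (simp add: field_simps power2_eq_square)
    then have "sqrt (1 - (s / a)^2) = r / a"
      unfolding r_def using a by (simp add: real_sqrt_divide)
    then have "inverse (sqrt (1 - (s / a)^2)) * (1 / a) = 1 / r"
      using a r by (simp add: field_simps)
    then show ?thesis
      using DERIV_chain'[OF l d] by simp
  qed
  have D2: "((\<lambda>s. sqrt (a^2 - s^2)) has_real_derivative - s / r) (at s)"
  proof -
    have d: "DERIV sqrt (a^2 - s^2) :> inverse (sqrt (a^2 - s^2)) / 2"
      using r unfolding r_def by (intro DERIV_real_sqrt) simp
    have l: "DERIV (\<lambda>x. a^2 - x^2) s :> - 2 * s"
      by (auto intro!: derivative_eq_intros)
    have "inverse (sqrt (a^2 - s^2)) / 2 * (- 2 * s) = - s / r"
      unfolding r_def by (simp add: field_simps)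
    then show ?thesis
      using DERIV_chain'[OF l d] by simp
  qed
  have D3: "((\<lambda>s. arcsin ((c^2 / (z - s) - z) / a)) has_real_derivative c / ((z - s) * r)) (at s)"
    unfolding r_def by (rule has_real_derivative_arcsin_semicircle_substitution[OF a az c s])
  have "(\<Phi> has_real_derivative z * (1 / r) - (- s / r) - c * (c / ((z - s) * r))) (at s)"
    unfolding \<Phi>_def by (intro DERIV_diff DERIV_cmult D1 D2 D3)
  moreover have "z * (1 / r) - (- s / r) - c * (c / ((z - s) * r)) = r / (z - s)"
  proof -
    have "z * (1 / r) - (- s / r) - c * (c / ((z - s) * r)) = ((z + s) * (z - s) - c^2) / ((z - s) * r)"
      using r zs by (simp add: field_simps power2_eq_square)
    also have "(z + s) * (z - s) - c^2 = r^2"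
      unfolding c(2) r(2) by (simp add: algebra_simps power2_eq_square)
    also have "r^2 / ((z - s) * r) = r / (z - s)"
      using r zs by (simp add: field_simps power2_eq_square)
    finally show ?thesis .
  qed
  ultimately show ?thesis
    unfolding r_def by simp
qed

lemma has_integral_sqrt_div:
  fixes a z :: real
  assumes a: "0 < a" and az: "a < z"
  shows "((\<lambda>s. sqrt (a^2 - s^2) / (z - s)) has_integral pi * (z - sqrt (z^2 - a^2))) {-a..a}"
proof -
  define c where "c = sqrt (z^2 - a^2)"
  have c: "c > 0" "c^2 = z^2 - a^2"
    unfolding c_def using a az by (simp_all add: power_strict_mono)
  define g where "g s = (c^2 / (z - s) - z) / a" for s
  define \<Phi> where "\<Phi> s = z * arcsin (s / a) - sqrt (a^2 - s^2) - c * arcsin (g s)" for s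
  have g_bound: "-1 \<le> g s \<and> g s \<le> 1" if "s \<in> {-a..a}" for s
  proof -
    have "0 \<le> a^2 - s^2"
      using that a abs_le_square_iff[of s a] by auto
    then have "0 \<le> c^2 * (a^2 - s^2) / (a^2 * (z - s)^2)"
      by simp
    then have "(g s)^2 \<le> 1"
      using semicircle_substitution_identity[OF a _ c(2), of s] that az unfolding g_def by simp
    then show ?thesis
      by (simp add: abs_square_le_1 abs_le_iff)
  qed
  have "continuous_on {-a..a} \<Phi>"
    unfolding \<Phi>_def g_def
  proof (intro continuous_intros ballI)
    fix s assume s: "s \<in> {-a..a}"
    then show "-1 \<le> s / a \<and> s / a \<le> 1"
      using a by (auto simp: le_divide_eq divide_le_eq)
    show "-1 \<le> (c^2 / (z - s) - z) / a \<and> (c^2 / (z - s) - z) / a \<le> 1"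
      using g_bound[OF s] unfolding g_def .
    show "z - s \<noteq> 0"
      using s az by auto
  qed (use a in auto)
  moreover have "(\<Phi> has_real_derivative sqrt (a^2 - s^2) / (z - s)) (at s)" if "-a < s" "s < a" for s
    unfolding \<Phi>_def g_def using has_real_derivative_semicircle_primitive[OF a az c that] by simp
  ultimately have "((\<lambda>s. sqrt (a^2 - s^2) / (z - s)) has_integral (\<Phi> a - \<Phi> (-a))) {-a..a}"
    using a by (intro fundamental_theorem_of_calculus_interior)
      (auto simp: has_real_derivative_iff_has_vector_derivative[symmetric])
  moreover have "g a = 1"
  proof -
    have "c^2 / (z - a) = z + a"
      using az c(2) by (simp add: field_simps power2_eq_square)
    then show ?thesis
      unfolding g_def using a by simp
  qed
  moreover have "g (-a) = -1"
  proof -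
    have "c^2 / (z + a) = z - a"
      using az a c(2) by (simp add: field_simps power2_eq_square)
    then show ?thesis
      unfolding g_def using a by simp
  qed
  ultimately show ?thesis
    unfolding \<Phi>_def c_def[symmetric] using a by (simp add: algebra_simps)
qed

lemma sets_semicircle [measurable_cong]: "sets (semicircle \<tau>) = sets borel"
  by (simp add: semicircle_def)

lemma AE_semicircle_bounded: "AE s in semicircle \<tau>. \<bar>s\<bar> \<le> 2 * sqrt \<tau>"
  unfolding semicircle_def
proof (subst AE_density)
  show "(\<lambda>s. ennreal (indicator {-2 * sqrt \<tau> .. 2 * sqrt \<tau>} s * sqrt (4 * \<tau> - s^2) / (2 * pi * \<tau>)))
      \<in> borel_measurable lborel"
    by measurable
qed (auto intro!: AE_I2 simp: indicator_def)

lemma semicircle_density: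
  assumes "\<tau> > 0"
  defines "a \<equiv> 2 * sqrt \<tau>"
  shows "semicircle \<tau> = density lborel (\<lambda>s. ennreal (indicator {-a..a} s * sqrt (a^2 - s^2) / (2 * pi * \<tau>)))"
    and "a > 0" "a^2 = 4 * \<tau>"
  using assms by (simp_all add: semicircle_def power_mult_distrib)

lemma finite_measure_semicircle:
  assumes "\<tau> > 0"
  shows "finite_measure (semicircle \<tau>)"
proof
  define a where "a = 2 * sqrt \<tau>"
  note a = semicircle_density[OF assms, folded a_def]
  have "emeasure (semicircle \<tau>) (space (semicircle \<tau>))
      = (\<integral>\<^sup>+ s. ennreal (indicator {-a..a} s * sqrt (a^2 - s^2) / (2 * pi * \<tau>)) \<partial>lborel)"
    unfolding a(1) by (simp add: emeasure_density)
  also have "\<dots> \<le> (\<integral>\<^sup>+ s. ennreal (a / (2 * pi * \<tau>)) * indicator {-a..a} s \<partial>lborel)"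
  proof (rule nn_integral_mono)
    fix s :: real
    have "sqrt (a^2 - s^2) \<le> sqrt (a^2)"
      by (intro real_sqrt_le_mono) simp
    then have "sqrt (a^2 - s^2) \<le> a"
      using a(2) by simp
    then show "ennreal (indicator {-a..a} s * sqrt (a^2 - s^2) / (2 * pi * \<tau>))
        \<le> ennreal (a / (2 * pi * \<tau>)) * indicator {-a..a} s"
      using assms by (auto simp: indicator_def divide_right_mono intro!: ennreal_leI)
  qed
  also have "\<dots> = ennreal (a / (2 * pi * \<tau>)) * emeasure lborel {-a..a}"
    by (rule nn_integral_cmult_indicator) simp
  also have "\<dots> < \<infinity>"
    using a(2) by (simp add: ennreal_mult_less_top)
  finally show "emeasure (semicircle \<tau>) (space (semicircle \<tau>)) \<noteq> \<infinity>"
    by simp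
qed

lemma cauchy_transform_semicircle:
  assumes \<tau>: "\<tau> > 0" and z: "z > 2 * sqrt \<tau>"
  shows "cauchy_transform (semicircle \<tau>) (of_real z) = of_real ((z - sqrt (z^2 - 4 * \<tau>)) / (2 * \<tau>))"
proof -
  define a where "a = 2 * sqrt \<tau>"
  note a = semicircle_density[OF \<tau>, folded a_def]
  define d where "d s = indicator {-a..a} s * sqrt (a^2 - s^2) / (2 * pi * \<tau>)" for s
  have d_measurable: "d \<in> borel_measurable borel"
    unfolding d_def by measurable
  have d_nonneg: "d s \<ge> 0" for s
  proof (cases "s \<in> {-a..a}")
    case True
    then have "s^2 \<le> a^2"
      using abs_le_square_iff[of s a] a(2) by auto
    then show ?thesis
      unfolding d_def using \<tau> True by simp
  qed (simp add: d_def)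
  have "(\<integral>s. 1 / (z - s) \<partial>semicircle \<tau>) = (\<integral>s. d s *\<^sub>R (1 / (z - s)) \<partial>lborel)"
    unfolding a(1) d_def[symmetric] by (rule integral_density) (use d_nonneg d_measurable in auto)
  also have "\<dots> = (\<integral>s. indicator {-a..a} s *\<^sub>R (sqrt (a^2 - s^2) / (z - s)) / (2 * pi * \<tau>) \<partial>lborel)"
    by (rule Bochner_Integration.integral_cong) (auto simp: d_def indicator_def)
  also have "\<dots> = (\<integral>s. indicator {-a..a} s *\<^sub>R (sqrt (a^2 - s^2) / (z - s)) \<partial>lborel) / (2 * pi * \<tau>)"
    by (rule integral_divide_zero)
  also have "(\<integral>s. indicator {-a..a} s *\<^sub>R (sqrt (a^2 - s^2) / (z - s)) \<partial>lborel)
      = pi * (z - sqrt (z^2 - a^2))"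
  proof -
    let ?f = "\<lambda>s. sqrt (a^2 - s^2) / (z - s)"
    have az: "a < z"
      using z unfolding a_def .
    then have continuous: "continuous_on {-a..a} ?f"
      by (intro continuous_intros) auto
    have "((\<lambda>s. indicator {-a..a} s *\<^sub>R ?f s) has_integral
        (\<integral>s. indicator {-a..a} s *\<^sub>R ?f s \<partial>lborel)) UNIV"
      using borel_integrable_atLeastAtMost'[OF continuous] unfolding set_integrable_def
      by (rule has_integral_integral_lborel)
    moreover have "(?f has_integral pi * (z - sqrt (z^2 - a^2))) {-a..a}"
      by (rule has_integral_sqrt_div[OF a(2) az])
    then have "((\<lambda>s. indicator {-a..a} s *\<^sub>R ?f s) has_integral pi * (z - sqrt (z^2 - a^2))) {-a..a}"
      by (subst has_integral_cong[where g="?f"]) auto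
    then have "((\<lambda>s. indicator {-a..a} s *\<^sub>R ?f s) has_integral pi * (z - sqrt (z^2 - a^2))) UNIV"
      by (intro has_integral_on_superset[where T=UNIV and S="{-a..a}"]) auto
    ultimately show ?thesis
      by (rule has_integral_unique)
  qed
  finally have "(\<integral>s. 1 / (z - s) \<partial>semicircle \<tau>) = (z - sqrt (z^2 - 4 * \<tau>)) / (2 * \<tau>)"
    using a(3) by simp
  then show ?thesis
    by (simp add: cauchy_transform_of_real)
qed

text \<open>A null measure would have vanishing Cauchy transform.\<close>

lemma measure_semicircle_pos:
  assumes \<tau>: "\<tau> > 0"
  shows "measure (semicircle \<tau>) (space (semicircle \<tau>)) > 0"
proof (rule ccontr)
  interpret finite_measure "semicircle \<tau>"
    using finite_measure_semicircle[OF \<tau>] .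
  define z where "z = 4 * sqrt \<tau>"
  assume "\<not> ?thesis"
  then have "emeasure (semicircle \<tau>) (space (semicircle \<tau>)) = 0"
    using measure_nonneg[of "semicircle \<tau>" "space (semicircle \<tau>)"] by (simp add: emeasure_eq_measure)
  then have "AE s in semicircle \<tau>. False"
    by (intro AE_I[of _ _ "space (semicircle \<tau>)"]) auto
  then have "cauchy_transform (semicircle \<tau>) (of_real z) = 0"
    unfolding cauchy_transform_def by (intro integral_eq_zero_AE) (auto elim: eventually_mono)
  moreover have "sqrt (z^2 - 4 * \<tau>) < z"
  proof -
    have "sqrt (z^2 - 4 * \<tau>) < sqrt (z^2)"
      using \<tau> by (intro real_sqrt_less_mono) simp
    also have "z > 0"
      unfolding z_def using \<tau> by simp
    then have "sqrt (z^2) = z"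
      by simp
    finally show ?thesis .
  qed
  moreover have "z > 2 * sqrt \<tau>"
    unfolding z_def using \<tau> by simp
  ultimately show False
    using cauchy_transform_semicircle[OF \<tau>, of z] \<tau> by simp
qed

lemma cauchy_transform_semicircle_inverse:
  assumes \<tau>: "\<tau> > 0" and w: "w > 0" "\<tau> * w^2 < 1"
  shows "cauchy_transform (semicircle \<tau>) (of_real (\<tau> * w + 1 / w)) = of_real w"
proof -
  define z where "z = \<tau> * w + 1 / w"
  have "\<tau> * w < 1 / w"
    using w by (simp add: field_simps power2_eq_square)
  have square: "z^2 - 4 * \<tau> = (1 / w - \<tau> * w)^2"
    unfolding z_def using w by (simp add: field_simps power2_eq_square)
  then have "sqrt (z^2 - 4 * \<tau>) = 1 / w - \<tau> * w"
    using \<open>\<tau> * w < 1 / w\<close> by simp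
  then have "z - sqrt (z^2 - 4 * \<tau>) = 2 * \<tau> * w"
    unfolding z_def by simp
  moreover have "z > 2 * sqrt \<tau>"
  proof (rule power_less_imp_less_base)
    have "0 < (1 / w - \<tau> * w)^2"
      using \<open>\<tau> * w < 1 / w\<close> by simp
    moreover have "(2 * sqrt \<tau>)^2 = 4 * \<tau>"
      using \<tau> by (simp add: power_mult_distrib)
    ultimately show "(2 * sqrt \<tau>)^2 < z^2"
      using square by linarith
    show "0 \<le> z"
      unfolding z_def using \<tau> w by simp
  qed
  ultimately have "cauchy_transform (semicircle \<tau>) (of_real z) = of_real w"
    using cauchy_transform_semicircle[OF \<tau>, of z] \<tau> by simp
  then show ?thesis
    by (simp only: z_def)
qed

section \<open>R-transforms\<close>

lemma R_transform_on_inverse: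
  assumes R: "R_transform_on M R e"
    and M: "finite_measure M" "sets M = sets borel" "AE s in M. \<bar>s\<bar> \<le> B" "B > 0"
      "measure M (space M) > 0"
  obtains \<delta> where "\<delta> > 0"
    "\<And>w z. w \<noteq> 0 \<Longrightarrow> cmod w < \<delta> \<Longrightarrow> 8 * B \<le> cmod z \<Longrightarrow> cauchy_transform M z = w \<Longrightarrow>
      R w + 1 / w = z"
proof -
  have e: "e > 0" and holomorphic: "R holomorphic_on ball 0 e"
    and R_inverse: "\<And>w. w \<in> ball 0 e - {0} \<Longrightarrow> cauchy_transform M (R w + 1 / w) = w"
    using R unfolding R_transform_on_def by auto
  have "continuous_on (cball 0 (e / 2)) R"
    using e by (intro holomorphic_on_imp_continuous_on holomorphic_on_subset[OF holomorphic]) auto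
  then have "compact (R ` cball 0 (e / 2))"
    by (intro compact_continuous_image) auto
  then obtain C where "\<And>y. y \<in> R ` cball 0 (e / 2) \<Longrightarrow> norm y \<le> C"
    using compact_imp_bounded bounded_iff by metis
  then have C: "cmod (R w) \<le> C" if "cmod w \<le> e / 2" for w
    using that by auto
  define K where "K = 8 * B + \<bar>C\<bar> + 1"
  have K: "K > 0"
    unfolding K_def using M(4) by simp
  define \<delta> where "\<delta> = min (e / 2) (1 / K)"
  have "\<delta> > 0"
    unfolding \<delta>_def using e K by simp
  moreover have "R w + 1 / w = z"
    if w: "w \<noteq> 0" "cmod w < \<delta>" and z: "8 * B \<le> cmod z" "cauchy_transform M z = w" for w z
  proof -
    have "cmod w * K < 1"
      using w(2) K unfolding \<delta>_def by (simp add: pos_less_divide_eq)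
    then have "K < cmod (1 / w)"
      using w(1) by (simp add: norm_divide pos_less_divide_eq mult.commute)
    moreover have "cmod (1 / w) \<le> cmod (R w + 1 / w) + cmod (R w)"
      using norm_triangle_ineq4[of "R w + 1 / w" "R w"] by simp
    moreover have "cmod (R w) \<le> C"
      using C w(2) unfolding \<delta>_def by simp
    ultimately have "8 * B \<le> cmod (R w + 1 / w)"
      unfolding K_def by linarith
    moreover have "cmod w < e"
      using w(2) e unfolding \<delta>_def by simp
    then have "cauchy_transform M (R w + 1 / w) = cauchy_transform M z"
      using R_inverse[of w] w(1) z(2) by simp
    ultimately show ?thesis
      using inj_onD[OF cauchy_transform_inj_on_large[OF M]] z(1) by blast
  qed
  ultimately show ?thesis
    using that by blast
qed

lemma R_transform_semicircle:
  assumes R: "R_transform_on (semicircle \<tau>) R e" and \<tau>: "\<tau> > 0"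
  obtains \<delta> where "\<delta> > 0" "\<And>w. 0 < w \<Longrightarrow> w < \<delta> \<Longrightarrow> R (of_real w) = of_real (\<tau> * w)"
proof -
  have "2 * sqrt \<tau> > 0"
    using \<tau> by simp
  then obtain \<delta>\<^sub>s where "\<delta>\<^sub>s > 0" and R_inverse: "\<And>w z. w \<noteq> 0 \<Longrightarrow> cmod w < \<delta>\<^sub>s \<Longrightarrow>
      8 * (2 * sqrt \<tau>) \<le> cmod z \<Longrightarrow> cauchy_transform (semicircle \<tau>) z = w \<Longrightarrow> R w + 1 / w = z"
    by (rule R_transform_on_inverse[OF R finite_measure_semicircle[OF \<tau>] sets_semicircle
      AE_semicircle_bounded _ measure_semicircle_pos[OF \<tau>]]) blast
  have K: "16 * sqrt \<tau> + 1 > 0"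
    using \<tau> by (simp add: add_nonneg_pos)
  define \<delta> where "\<delta> = min \<delta>\<^sub>s (1 / (16 * sqrt \<tau> + 1))"
  have "\<delta> > 0"
    unfolding \<delta>_def using \<open>\<delta>\<^sub>s > 0\<close> K by simp
  moreover have "R (of_real w) = of_real (\<tau> * w)" if w: "0 < w" "w < \<delta>" for w
  proof -
    have "w * (16 * sqrt \<tau> + 1) < 1"
      using w K unfolding \<delta>_def by (simp add: pos_less_divide_eq)
    then have "16 * sqrt \<tau> < 1 / w" and "sqrt \<tau> * w < 1"
      using w(1) \<tau> by (simp_all add: pos_less_divide_eq algebra_simps)
    then have "(sqrt \<tau> * w)^2 < 1^2"
      using w(1) \<tau> by (intro power_strict_mono) auto
    then have "\<tau> * w^2 < 1"
      using \<tau> by (simp add: power_mult_distrib)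
    have "0 < \<tau> * w" "0 < \<tau> * w + 1 / w"
      using w(1) \<tau> by (simp_all add: add_pos_pos)
    then have "cmod (complex_of_real (\<tau> * w + 1 / w)) = \<tau> * w + 1 / w"
      by (simp only: norm_of_real abs_of_pos)
    then have "R (of_real w) + 1 / of_real w = of_real (\<tau> * w + 1 / w)"
      using \<open>16 * sqrt \<tau> < 1 / w\<close> \<open>0 < \<tau> * w\<close> w unfolding \<delta>_def
      by (intro R_inverse cauchy_transform_semicircle_inverse[OF \<tau> w(1) \<open>\<tau> * w^2 < 1\<close>]) auto
    then show ?thesis
      by simp
  qed
  ultimately show ?thesis
    using that by blast
qed

lemma R_transform_on_real_inverse:
  assumes R: "R_transform_on \<mu> R e" and \<mu>: "compact_prob \<mu>"
  obtains \<delta> U where "\<delta> > 0" "\<And>u w. U \<le> u \<Longrightarrow> 0 < w \<Longrightarrow> w < \<delta> \<Longrightarrow>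
      cauchy_transform \<mu> (of_real u) = of_real w \<Longrightarrow> R (of_real w) = of_real (u - 1 / w)"
proof -
  interpret prob_space \<mu>
    using \<mu> unfolding compact_prob_def by simp
  have sets: "sets \<mu> = sets borel"
    using \<mu> unfolding compact_prob_def by simp
  obtain B where B: "B > 0" "AE s in \<mu>. \<bar>s\<bar> \<le> B"
    using compact_prob_AE_bounded[OF \<mu>] by blast
  have "measure \<mu> (space \<mu>) > 0"
    by (simp add: prob_space)
  then obtain \<delta> where "\<delta> > 0" and R_inverse: "\<And>w z. w \<noteq> 0 \<Longrightarrow> cmod w < \<delta> \<Longrightarrow>
      8 * B \<le> cmod z \<Longrightarrow> cauchy_transform \<mu> z = w \<Longrightarrow> R w + 1 / w = z"
    by (rule R_transform_on_inverse[OF R finite_measure_axioms sets B(2,1)]) blast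
  moreover have "R (of_real w) = of_real (u - 1 / w)"
    if "8 * B \<le> u" "0 < w" "w < \<delta>" "cauchy_transform \<mu> (of_real u) = of_real w" for u w
  proof -
    have "R (of_real w) + 1 / of_real w = of_real u"
      using that B(1) by (intro R_inverse) auto
    then have "R (of_real w) = of_real u - 1 / of_real w"
      by (simp only: eq_diff_eq)
    then show ?thesis
      by simp
  qed
  ultimately show ?thesis
    using that by blast
qed

lemma free_conv_semicircle_real_subordination:
  assumes conv: "is_free_add_conv \<rho> \<mu> (semicircle \<tau>)" and \<mu>: "compact_prob \<mu>" and \<tau>: "\<tau> > 0"
  obtains \<eta> U where "\<eta> > 0"
    "\<And>u w. U \<le> u \<Longrightarrow> 0 < w \<Longrightarrow> w < \<eta> \<Longrightarrow> cauchy_transform \<mu> (of_real u) = of_real w \<Longrightarrow>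
      cauchy_transform \<rho> (of_real (u + \<tau> * w)) = of_real w"
proof -
  obtain e R\<^sub>\<mu> R\<^sub>s R\<^sub>\<rho> where R\<^sub>\<mu>: "R_transform_on \<mu> R\<^sub>\<mu> e" and R\<^sub>s: "R_transform_on (semicircle \<tau>) R\<^sub>s e"
    and R\<^sub>\<rho>: "R_transform_on \<rho> R\<^sub>\<rho> e" and R_add: "\<forall>w \<in> ball 0 e. R\<^sub>\<rho> w = R\<^sub>\<mu> w + R\<^sub>s w"
    using conv unfolding is_free_add_conv_def by blast
  obtain \<delta>\<^sub>\<mu> U where "\<delta>\<^sub>\<mu> > 0" and R\<^sub>\<mu>_real: "\<And>u w. U \<le> u \<Longrightarrow> 0 < w \<Longrightarrow> w < \<delta>\<^sub>\<mu> \<Longrightarrow>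
      cauchy_transform \<mu> (of_real u) = of_real w \<Longrightarrow> R\<^sub>\<mu> (of_real w) = of_real (u - 1 / w)"
    using R_transform_on_real_inverse[OF R\<^sub>\<mu> \<mu>] by blast
  obtain \<delta>\<^sub>s where "\<delta>\<^sub>s > 0" and R\<^sub>s_real: "\<And>w. 0 < w \<Longrightarrow> w < \<delta>\<^sub>s \<Longrightarrow> R\<^sub>s (of_real w) = of_real (\<tau> * w)"
    using R_transform_semicircle[OF R\<^sub>s \<tau>] by blast
  have "e > 0"
    using R\<^sub>\<mu> unfolding R_transform_on_def by simp
  define \<eta> where "\<eta> = min e (min \<delta>\<^sub>\<mu> \<delta>\<^sub>s)"
  have "\<eta> > 0"
    unfolding \<eta>_def using \<open>e > 0\<close> \<open>\<delta>\<^sub>\<mu> > 0\<close> \<open>\<delta>\<^sub>s > 0\<close> by simp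
  moreover have "cauchy_transform \<rho> (of_real (u + \<tau> * w)) = of_real w"
    if u: "U \<le> u" and w: "0 < w" "w < \<eta>" and G: "cauchy_transform \<mu> (of_real u) = of_real w" for u w
  proof -
    have ball: "complex_of_real w \<in> ball 0 e - {0}"
      using w unfolding \<eta>_def by auto
    have "R\<^sub>\<rho> (of_real w) + 1 / of_real w = of_real (u + \<tau> * w)"
      using R_add ball R\<^sub>\<mu>_real[OF u w(1) _ G] R\<^sub>s_real[OF w(1)] w(2) unfolding \<eta>_def
      by (simp add: algebra_simps)
    moreover have "cauchy_transform \<rho> (R\<^sub>\<rho> (of_real w) + 1 / of_real w) = of_real w"
      using R\<^sub>\<rho> ball unfolding R_transform_on_def by blast
    ultimately show ?thesis
      by simp
  qed
  ultimately show ?thesis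
    using that by blast
qed

section \<open>Subordination\<close>

lemma holomorphic_eq_0_if_eventually_0_at_top:
  assumes "f holomorphic_on S" "open S" "connected S"
    and ray: "\<forall>\<^sub>F u in at_top. of_real u \<in> S \<and> f (of_real u) = 0" and "z \<in> S"
  shows "f z = 0"
proof -
  obtain R where R: "\<And>u. u \<ge> R \<Longrightarrow> of_real u \<in> S \<and> f (of_real u) = 0"
    using ray unfolding eventually_at_top_linorder by blast
  have limit_point: "complex_of_real (R + 1) islimpt complex_of_real ` {R<..}"
    unfolding islimpt_approachable
  proof (intro allI impI)
    fix \<epsilon> :: real assume "\<epsilon> > 0"
    define t where "t = min (\<epsilon> / 2) 1"
    have t: "0 < t" "t < \<epsilon>" "t \<le> 1"
      unfolding t_def using \<open>\<epsilon> > 0\<close> by auto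
    show "\<exists>x'\<in>complex_of_real ` {R<..}. x' \<noteq> of_real (R + 1) \<and> dist x' (of_real (R + 1)) < \<epsilon>"
    proof (intro bexI conjI)
      show "complex_of_real (R + 1 + t) \<noteq> of_real (R + 1)"
        using t by simp
      have "dist (complex_of_real (R + 1 + t)) (of_real (R + 1)) = t"
        using t by (simp add: dist_norm)
      then show "dist (complex_of_real (R + 1 + t)) (of_real (R + 1)) < \<epsilon>"
        using t by simp
      show "complex_of_real (R + 1 + t) \<in> complex_of_real ` {R<..}"
        using t by (intro imageI) simp
    qed
  qed
  show ?thesis
  proof (rule analytic_continuation[OF assms(1-3) _ _ limit_point _ assms(5)])
    show "complex_of_real ` {R<..} \<subseteq> S"
      using R by force
    show "complex_of_real (R + 1) \<in> S"
      using R[of "R + 1"] by simp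
    show "f w = 0" if "w \<in> complex_of_real ` {R<..}" for w
      using R that by force
  qed
qed

lemma abs_le_one_plus_square:
  fixes x :: real
  shows "\<bar>x\<bar> \<le> 1 + x^2"
proof -
  have "0 \<le> (\<bar>x\<bar> - 1)^2" "0 \<le> x^2"
    by simp_all
  moreover have "(\<bar>x\<bar> - 1)^2 = x^2 - 2 * \<bar>x\<bar> + 1"
    by (simp add: power2_eq_square algebra_simps)
  ultimately show ?thesis
    by linarith
qed

locale semicircle_subordination =
  fixes \<mu>0 \<mu>\<tau> :: "real measure" and xs \<tau> :: real
  assumes compact_prob_\<mu>0: "compact_prob \<mu>0"
    and AE_less_xs: "AE s in \<mu>0. s < xs"
    and tau_pos: "0 < \<tau>"
    and tau_crit: "\<tau> \<le> 1 / (\<integral>s. 1 / (xs - s)^2 \<partial>\<mu>0)"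
    and free_conv: "is_free_add_conv \<mu>\<tau> \<mu>0 (semicircle \<tau>)"
begin

lemma sets_\<mu>0 [measurable_cong]: "sets \<mu>0 = sets borel"
  using compact_prob_\<mu>0 unfolding compact_prob_def by simp

sublocale \<mu>0: prob_space \<mu>0
  using compact_prob_\<mu>0 unfolding compact_prob_def by simp

lemma compact_prob_\<mu>\<tau>: "compact_prob \<mu>\<tau>"
  using free_conv unfolding is_free_add_conv_def by simp

lemma sets_\<mu>\<tau> [measurable_cong]: "sets \<mu>\<tau> = sets borel"
  using compact_prob_\<mu>\<tau> unfolding compact_prob_def by simp

sublocale \<mu>\<tau>: prob_space \<mu>\<tau>
  using compact_prob_\<mu>\<tau> unfolding compact_prob_def by simp

abbreviation G0 :: "complex \<Rightarrow> complex" where "G0 \<equiv> cauchy_transform \<mu>0"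

abbreviation G\<tau> :: "complex \<Rightarrow> complex" where "G\<tau> \<equiv> cauchy_transform \<mu>\<tau>"

definition F :: "complex \<Rightarrow> complex" where "F z = z + of_real \<tau> * G0 z"

text \<open>Were the integral in \<open>tau_crit\<close> undefined, it would be \<open>0\<close>, and \<open>\<tau> \<le> 1 / 0 = 0\<close>.\<close>

lemma integrable_inverse_square: "integrable \<mu>0 (\<lambda>s. 1 / (xs - s)^2)"
  and tau_integral_inverse_square_le: "\<tau> * (\<integral>s. 1 / (xs - s)^2 \<partial>\<mu>0) \<le> 1"
proof -
  have pos: "(\<integral>s. 1 / (xs - s)^2 \<partial>\<mu>0) > 0"
  proof (rule ccontr)
    assume "\<not> ?thesis"
    then have "1 / (\<integral>s. 1 / (xs - s)^2 \<partial>\<mu>0) \<le> 0"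
      by (simp add: divide_nonpos_nonneg le_less_linear)
    then show False
      using tau_crit tau_pos by linarith
  qed
  then show "integrable \<mu>0 (\<lambda>s. 1 / (xs - s)^2)"
    using not_integrable_integral_eq by fastforce
  show "\<tau> * (\<integral>s. 1 / (xs - s)^2 \<partial>\<mu>0) \<le> 1"
    using tau_crit pos by (simp add: field_simps)
qed

lemma integrable_inverse: "integrable \<mu>0 (\<lambda>s. 1 / (xs - s))"
proof (rule Bochner_Integration.integrable_bound)
  show "integrable \<mu>0 (\<lambda>s. 1 + 1 / (xs - s)^2)"
    using integrable_inverse_square by simp
  show "AE s in \<mu>0. norm (1 / (xs - s)) \<le> norm (1 + 1 / (xs - s)^2)"
    using abs_le_one_plus_square[of "1 / (xs - s)" for s] by (intro AE_I2) (simp add: power_one_over)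
qed measurable

lemma AE_norm_kernel_le:
  assumes "xs < Re z"
  shows "AE s in \<mu>0. cmod (1 / (z - of_real s)) \<le> 1 / (Re z - xs)"
  using AE_less_xs
proof (rule eventually_mono)
  fix s assume "s < xs"
  then have "Re z - xs \<le> cmod (z - of_real s)"
    using abs_Re_le_cmod[of "z - of_real s"] by simp
  then show "cmod (1 / (z - of_real s)) \<le> 1 / (Re z - xs)"
    using assms by (simp add: norm_divide frac_le)
qed

lemma integrable_kernel:
  assumes "xs < Re z"
  shows "integrable \<mu>0 (\<lambda>s. 1 / (z - of_real s))"
  using AE_norm_kernel_le[OF assms] by (rule \<mu>0.integrable_const_bound) measurable

lemma norm_G0_le:
  assumes "xs < Re z"
  shows "cmod (G0 z) \<le> 1 / (Re z - xs)"
  using \<mu>0.norm_integral_le_const_measure[OF AE_norm_kernel_le[OF assms]] assms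
  unfolding cauchy_transform_def by (simp add: \<mu>0.prob_space)

lemma G0_holomorphic: "G0 holomorphic_on {z. xs < Re z}"
proof (rule holomorphic_on_subset)
  show "G0 holomorphic_on - complex_of_real ` {..xs}"
    using AE_less_xs
    by (intro cauchy_transform_holomorphic \<mu>0.finite_measure_axioms sets_\<mu>0) (auto elim: eventually_mono)
qed auto

lemma Im_G0:
  assumes "xs < Re z"
  shows "Im (G0 z) = - Im z * (\<integral>s. 1 / (cmod (z - of_real s))^2 \<partial>\<mu>0)"
proof -
  have "Im (G0 z) = (\<integral>s. Im (1 / (z - of_real s)) \<partial>\<mu>0)"
    unfolding cauchy_transform_def using integrable_kernel[OF assms] by (simp add: integral_Im)
  also have "\<dots> = (\<integral>s. - Im z * (1 / (cmod (z - of_real s))^2) \<partial>\<mu>0)"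
    by (rule Bochner_Integration.integral_cong) (auto simp: Im_divide')
  also have "\<dots> = - Im z * (\<integral>s. 1 / (cmod (z - of_real s))^2 \<partial>\<mu>0)"
    by (rule integral_mult_right_zero)
  finally show ?thesis .
qed

lemma tau_integral_kernel_less_1:
  assumes z: "xs < Re z"
  shows "\<tau> * (\<integral>s. 1 / (cmod (z - of_real s))^2 \<partial>\<mu>0) < 1"
proof -
  have "(\<integral>s. 1 / (cmod (z - of_real s))^2 \<partial>\<mu>0) < (\<integral>s. 1 / (xs - s)^2 \<partial>\<mu>0)"
  proof (rule \<mu>0.integral_less_AE_space)
    show "integrable \<mu>0 (\<lambda>s. 1 / (cmod (z - of_real s))^2)"
    proof (rule \<mu>0.integrable_const_bound[where B="1 / (Re z - xs)^2"])
      show "AE s in \<mu>0. norm (1 / (cmod (z - of_real s))^2) \<le> 1 / (Re z - xs)^2"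
        using AE_norm_kernel_le[OF z]
      proof (rule eventually_mono)
        fix s assume "cmod (1 / (z - of_real s)) \<le> 1 / (Re z - xs)"
        then have "(cmod (1 / (z - of_real s)))^2 \<le> (1 / (Re z - xs))^2"
          by (rule power_mono) simp
        then show "norm (1 / (cmod (z - of_real s))^2) \<le> 1 / (Re z - xs)^2"
          by (simp add: norm_divide power_one_over)
      qed
    qed measurable
    show "AE s in \<mu>0. 1 / (cmod (z - of_real s))^2 < 1 / (xs - s)^2"
      using AE_less_xs
    proof (rule eventually_mono)
      fix s assume s: "s < xs"
      have "xs - s < cmod (z - of_real s)"
        using abs_Re_le_cmod[of "z - of_real s"] z by simp
      then have "(xs - s)^2 < (cmod (z - of_real s))^2" "0 < cmod (z - of_real s)"
        using s by (intro power_strict_mono, auto)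
      then show "1 / (cmod (z - of_real s))^2 < 1 / (xs - s)^2"
        using s by (intro divide_strict_left_mono mult_pos_pos) auto
    qed
  qed (simp_all add: integrable_inverse_square \<mu>0.emeasure_space_1)
  then show ?thesis
    using tau_pos tau_integral_inverse_square_le
    by (meson mult_strict_left_mono order_less_le_trans)
qed

lemma F_holomorphic: "F holomorphic_on {z. xs < Re z}"
  unfolding F_def[abs_def] by (intro holomorphic_intros G0_holomorphic)

lemma Im_F_pos_iff:
  assumes "xs < Re z"
  shows "0 < Im (F z) \<longleftrightarrow> 0 < Im z"
proof -
  have "Im (F z) = Im z * (1 - \<tau> * (\<integral>s. 1 / (cmod (z - of_real s))^2 \<partial>\<mu>0))"
    unfolding F_def using Im_G0[OF assms] by (simp add: algebra_simps)
  then show ?thesis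
    using tau_integral_kernel_less_1[OF assms] by (simp add: zero_less_mult_iff)
qed

lemma F_of_real: "F (of_real u) = of_real (u + \<tau> * (\<integral>s. 1 / (u - s) \<partial>\<mu>0))"
  unfolding F_def cauchy_transform_of_real by simp

lemma real_cauchy_transform_bounds:
  assumes u: "xs < u"
  shows "0 < (\<integral>s. 1 / (u - s) \<partial>\<mu>0)" "(\<integral>s. 1 / (u - s) \<partial>\<mu>0) \<le> 1 / (u - xs)"
    "(\<integral>s. 1 / (u - s) \<partial>\<mu>0) \<le> (\<integral>s. 1 / (xs - s) \<partial>\<mu>0)"
proof -
  have bound: "AE s in \<mu>0. 0 < 1 / (u - s) \<and> 1 / (u - s) \<le> 1 / (xs - s) \<and> 1 / (u - s) \<le> 1 / (u - xs)"
    using AE_less_xs by (rule eventually_mono) (use u in \<open>auto intro!: divide_left_mono\<close>)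
  have integrable: "integrable \<mu>0 (\<lambda>s. 1 / (u - s))"
    using bound by (intro \<mu>0.integrable_const_bound[where B="1 / (u - xs)"]) (auto elim: eventually_mono)
  have "(\<integral>s. 0 \<partial>\<mu>0) < (\<integral>s. 1 / (u - s) \<partial>\<mu>0)"
    using integrable bound
    by (intro \<mu>0.integral_less_AE_space) (auto elim: eventually_mono simp: \<mu>0.emeasure_space_1)
  then show "0 < (\<integral>s. 1 / (u - s) \<partial>\<mu>0)"
    by simp
  show "(\<integral>s. 1 / (u - s) \<partial>\<mu>0) \<le> 1 / (u - xs)"
    using integrable bound by (intro \<mu>0.integral_le_const) (auto elim: eventually_mono)
  show "(\<integral>s. 1 / (u - s) \<partial>\<mu>0) \<le> (\<integral>s. 1 / (xs - s) \<partial>\<mu>0)"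
    using integrable integrable_inverse bound by (intro integral_mono_AE) (auto elim: eventually_mono)
qed

lemma subordination_at_top: "\<forall>\<^sub>F u in at_top. G\<tau> (F (of_real u)) = G0 (of_real u)"
proof -
  obtain \<eta> U where \<eta>: "\<eta> > 0" and real_subordination: "\<And>u w. U \<le> u \<Longrightarrow> 0 < w \<Longrightarrow> w < \<eta> \<Longrightarrow>
      G0 (of_real u) = of_real w \<Longrightarrow> G\<tau> (of_real (u + \<tau> * w)) = of_real w"
    using free_conv_semicircle_real_subordination[OF free_conv compact_prob_\<mu>0 tau_pos] by blast
  have "G\<tau> (F (of_real u)) = G0 (of_real u)" if u: "max U (xs + 1 / \<eta>) < u" for u
  proof -
    define w where "w = (\<integral>s. 1 / (u - s) \<partial>\<mu>0)"
    have "1 / \<eta> < u - xs" "0 < 1 / \<eta>"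
      using u \<eta> by auto
    then have "xs < u"
      by linarith
    then have "1 / (u - xs) < \<eta>"
      using \<open>1 / \<eta> < u - xs\<close> \<eta> by (simp add: field_simps)
    then have "0 < w" "w < \<eta>"
      using real_cauchy_transform_bounds[OF \<open>xs < u\<close>] unfolding w_def by auto
    moreover have "G0 (of_real u) = of_real w"
      unfolding w_def by (rule cauchy_transform_of_real)
    ultimately show ?thesis
      using real_subordination[of u w] u unfolding F_of_real w_def[symmetric] by simp
  qed
  then show ?thesis
    using eventually_gt_at_top[of "max U (xs + 1 / \<eta>)"] by (auto elim: eventually_mono)
qed

lemma F_not_real_in_interval:
  assumes z: "xs < Re z" and B: "B \<ge> 0" and away: "0 < Im z \<or> \<bar>xs\<bar> + B + \<tau> + 1 < Re z"
  shows "F z \<notin> complex_of_real ` {-B..B}"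
  using away
proof
  assume "0 < Im z"
  then have "0 < Im (F z)"
    using Im_F_pos_iff[OF z] by simp
  then show ?thesis
    by auto
next
  assume far: "\<bar>xs\<bar> + B + \<tau> + 1 < Re z"
  then have "1 \<le> Re z - xs"
    using B tau_pos by linarith
  then have "cmod (G0 z) \<le> 1"
    using norm_G0_le[OF z] by (simp add: order_trans[OF _ divide_le_eq_1_pos[THEN iffD2]])
  then have "-1 \<le> Re (G0 z)"
    using abs_Re_le_cmod[of "G0 z"] by linarith
  then have "\<tau> * (-1) \<le> \<tau> * Re (G0 z)"
    using tau_pos by (intro mult_left_mono) auto
  then have "B < Re (F z)"
    using far unfolding F_def by simp
  then show ?thesis
    by auto
qed

lemma subordination:
  assumes z: "xs < Re z" "0 < Im z"
  shows "G\<tau> (F z) = G0 z"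
proof -
  obtain B where B: "B > 0" "AE s in \<mu>\<tau>. \<bar>s\<bar> \<le> B"
    using compact_prob_AE_bounded[OF compact_prob_\<mu>\<tau>] by blast
  have "AE s in \<mu>\<tau>. s \<in> {-B..B}"
    using B(2) by (rule eventually_mono) auto
  then have G\<tau>_holomorphic: "G\<tau> holomorphic_on - complex_of_real ` {-B..B}"
    by (intro cauchy_transform_holomorphic[OF \<mu>\<tau>.finite_measure_axioms sets_\<mu>\<tau>]) (use B(1) in auto)
  define R where "R = \<bar>xs\<bar> + B + \<tau> + 1"
  define S where "S = {z. xs < Re z} \<inter> {z. 0 < Im z} \<union> {z. R < Re z}"
  have S_half_plane: "S \<subseteq> {z. xs < Re z}"
    unfolding S_def R_def using B(1) tau_pos by auto
  have "open S"
    unfolding S_def by (intro open_Un open_Int open_halfspace_Re_gt open_halfspace_Im_gt)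
  moreover have "connected S"
  proof -
    have "Complex (R + 1) 1 \<in> ({z. xs < Re z} \<inter> {z. 0 < Im z}) \<inter> {z. R < Re z}"
      unfolding R_def using B(1) tau_pos by auto
    then show ?thesis
      unfolding S_def
    proof (intro connected_Un)
      show "connected ({z. xs < Re z} \<inter> {z. 0 < Im z})"
        by (intro convex_connected convex_Int convex_halfspace_Re_gt convex_halfspace_Im_gt)
      show "connected {z. R < Re z}"
        by (intro convex_connected convex_halfspace_Re_gt)
    qed blast
  qed
  moreover have "(\<lambda>z. G\<tau> (F z) - G0 z) holomorphic_on S"
  proof (rule holomorphic_on_diff)
    have "F ` S \<subseteq> - complex_of_real ` {-B..B}"
    proof (rule image_subsetI)
      fix z assume "z \<in> S"
      then have "xs < Re z" "0 < Im z \<or> \<bar>xs\<bar> + B + \<tau> + 1 < Re z"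
        using S_half_plane unfolding S_def R_def by auto
      then show "F z \<in> - complex_of_real ` {-B..B}"
        using F_not_real_in_interval[of z B] B(1) by simp
    qed
    moreover have "F holomorphic_on S"
      using F_holomorphic S_half_plane by (rule holomorphic_on_subset)
    ultimately have "(G\<tau> \<circ> F) holomorphic_on S"
      using G\<tau>_holomorphic holomorphic_on_compose_gen by blast
    then show "(\<lambda>z. G\<tau> (F z)) holomorphic_on S"
      by (simp add: o_def)
    show "G0 holomorphic_on S"
      using G0_holomorphic S_half_plane by (rule holomorphic_on_subset)
  qed
  moreover have "\<forall>\<^sub>F u in at_top. of_real u \<in> S \<and> G\<tau> (F (of_real u)) - G0 (of_real u) = 0"
    using subordination_at_top eventually_gt_at_top[of R] by eventually_elim (simp add: S_def)
  moreover have "z \<in> S"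
    unfolding S_def using z by simp
  ultimately show ?thesis
    using holomorphic_eq_0_if_eventually_0_at_top by fastforce
qed

lemma F_real_preimage:
  assumes x: "xs + \<tau> * (\<integral>s. 1 / (xs - s) \<partial>\<mu>0) < x"
  obtains u where "xs < u" "F (of_real u) = of_real x"
proof -
  define f where "f u = u + \<tau> * (\<integral>s. 1 / (u - s) \<partial>\<mu>0)" for u
  have f_ge: "u \<le> f u" if "xs < u" for u
    using real_cauchy_transform_bounds(1)[OF that] tau_pos unfolding f_def by simp
  define T where "T = \<tau> * (\<integral>s. 1 / (xs - s) \<partial>\<mu>0)"
  define u1 where "u1 = xs + (x - (xs + T)) / 2"
  have "xs + T < x"
    using x unfolding T_def .
  have u1: "xs < u1" "u1 + T < x"
    using \<open>xs + T < x\<close> unfolding u1_def by (simp_all add: field_simps)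
  have "\<tau> * (\<integral>s. 1 / (u1 - s) \<partial>\<mu>0) \<le> T"
    unfolding T_def using real_cauchy_transform_bounds(3)[OF u1(1)] tau_pos by (intro mult_left_mono) auto
  then have "f u1 < x"
    unfolding f_def using u1(2) by linarith
  then have "u1 \<le> x" "xs < x"
    using f_ge[OF u1(1)] u1(1) by linarith+
  have "continuous_on {z. xs < Re z} F"
    using F_holomorphic by (rule holomorphic_on_imp_continuous_on)
  then have "continuous_on {u1..x} (\<lambda>u. F (of_real u))"
    by (rule continuous_on_compose2) (use u1(1) in \<open>auto intro!: continuous_intros\<close>)
  then have "continuous_on {u1..x} (\<lambda>u. Re (F (of_real u)))"
    by (intro continuous_intros)
  then have "continuous_on {u1..x} f"
    unfolding f_def F_of_real by simp
  then obtain u where "u1 \<le> u" "f u = x"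
    using IVT'[of f u1 x x] \<open>f u1 < x\<close> f_ge[OF \<open>xs < x\<close>] \<open>u1 \<le> x\<close> by auto
  then show ?thesis
    using that[of u] u1(1) unfolding F_of_real f_def by simp
qed

lemma F_not_constant: "\<not> F constant_on {z. xs < Re z}"
proof
  assume "F constant_on {z. xs < Re z}"
  then obtain c where c: "\<And>z. xs < Re z \<Longrightarrow> F z = c"
    unfolding constant_on_def by blast
  define v where "v = xs + 1 + \<tau> * (\<integral>s. 1 / (xs + 1 - s) \<partial>\<mu>0)"
  have "xs + 1 \<le> v"
    unfolding v_def using real_cauchy_transform_bounds(1)[of "xs + 1"] tau_pos by simp
  then have "xs < v + 1"
    by simp
  have "v + 1 \<le> Re (F (of_real (v + 1)))"
    unfolding F_of_real using real_cauchy_transform_bounds(1)[OF \<open>xs < v + 1\<close>] tau_pos by simp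
  moreover have "F (of_real (v + 1)) = F (of_real (xs + 1))"
    using c \<open>xs < v + 1\<close> by simp
  moreover have "Re (F (of_real (xs + 1))) = v"
    unfolding F_of_real v_def by simp
  ultimately show False
    by simp
qed

lemma Im_G\<tau>_tendsto_0:
  assumes x: "xs + \<tau> * (\<integral>s. 1 / (xs - s) \<partial>\<mu>0) < x"
  shows "((\<lambda>w. Im (G\<tau> w)) \<longlongrightarrow> 0) (at (of_real x) within {w. 0 < Im w})"
proof (rule tendstoI)
  fix \<eta> :: real assume \<eta>: "\<eta> > 0"
  obtain u where u: "xs < u" "F (of_real u) = of_real x"
    using F_real_preimage[OF x] by blast
  have "isCont G0 (of_real u)"
    using G0_holomorphic u(1) open_halfspace_Re_gt[of xs]
    by (auto simp: continuous_on_eq_continuous_at dest: holomorphic_on_imp_continuous_on)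
  then obtain r where r: "r > 0" "\<And>z. dist z (of_real u) < r \<Longrightarrow> dist (G0 z) (G0 (of_real u)) < \<eta>"
    unfolding continuous_at_eps_delta using \<eta> by blast
  define N where "N = ball (complex_of_real u) (min r ((u - xs) / 2))"
  have N: "N \<subseteq> {z. xs < Re z}"
  proof
    fix z assume "z \<in> N"
    then have "\<bar>Re (z - of_real u)\<bar> < (u - xs) / 2"
      unfolding N_def using abs_Re_le_cmod[of "z - of_real u"] by (simp add: dist_norm norm_minus_commute)
    then have "\<bar>Re z - u\<bar> < (u - xs) / 2"
      by simp
    then have "- (Re z - u) < (u - xs) / 2"
      unfolding abs_less_iff by blast
    then show "z \<in> {z. xs < Re z}"
      using u(1) by simp
  qed
  have "open (F ` N)"
    using F_holomorphic open_halfspace_Re_gt[of xs] convex_connected[OF convex_halfspace_Re_gt] N F_not_constant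
    unfolding N_def by (intro open_mapping_thm) auto
  moreover have "complex_of_real u \<in> N"
    unfolding N_def using u(1) r(1) by simp
  then have "of_real x \<in> F ` N"
    unfolding u(2)[symmetric] by (rule imageI)
  ultimately obtain \<delta> where \<delta>: "\<delta> > 0" "ball (of_real x) \<delta> \<subseteq> F ` N"
    using open_contains_ball_eq by blast
  have "\<bar>Im (G\<tau> w)\<bar> < \<eta>" if w: "0 < Im w" "dist w (of_real x) < \<delta>" for w
  proof -
    obtain z where z: "z \<in> N" "w = F z"
      using \<delta>(2) w(2) by (auto simp: dist_commute)
    then have "xs < Re z" "0 < Im z"
      using N Im_F_pos_iff w(1) by auto
    then have "G\<tau> w = G0 z"
      using subordination z(2) by simp
    moreover have "dist (G0 z) (G0 (of_real u)) < \<eta>"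
      using r(2) z(1) unfolding N_def by (simp add: dist_commute)
    moreover have "Im (G0 (of_real u)) = 0"
      by (simp add: cauchy_transform_of_real)
    ultimately show ?thesis
      using abs_Im_le_cmod[of "G0 z - G0 (of_real u)"] by (simp add: dist_norm)
  qed
  then show "\<forall>\<^sub>F w in at (of_real x) within {w. 0 < Im w}. dist (Im (G\<tau> w)) 0 < \<eta>"
    unfolding eventually_at using \<delta>(1) by (auto simp: dist_real_def)
qed

theorem emeasure_right_of_edge_eq_0: "emeasure \<mu>\<tau> {xs + \<tau> * (\<integral>s. 1 / (xs - s) \<partial>\<mu>0) <..} = 0"
  using \<mu>\<tau>.finite_measure_axioms sets_\<mu>\<tau> Im_G\<tau>_tendsto_0
  by (rule emeasure_greaterThan_eq_0_if_Im_cauchy_transform_tendsto_0)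

end

theorem lemma2p1:
  fixes \<mu>\<^sub>0 :: "real measure" and \<psi>\<^sub>0 :: "real \<Rightarrow> real"
    and xs c\<^sub>0 \<epsilon> \<tau> :: real and k :: nat and h :: "real \<Rightarrow> real"
    and \<mu>\<^sub>\<tau> :: "real measure"
  assumes A_prob: "compact_prob \<mu>\<^sub>0"
    and A_dens: "\<mu>\<^sub>0 = density lborel (\<lambda>s. ennreal (\<psi>\<^sub>0 s))"
    and A_nonneg: "\<forall>s. \<psi>\<^sub>0 s \<ge> 0"
    and A_cont: "continuous_on UNIV \<psi>\<^sub>0"
    and B_xs: "xs \<in> measure_support \<mu>\<^sub>0"
    and B_c0: "c\<^sub>0 > 0"
    and B_k: "k \<ge> 1"
    and B_h: "real_analytic_near h xs" "h xs = 1"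
    and B_eps: "\<epsilon> > 0"
    and B_left: "\<forall>s \<in> {xs - \<epsilon> .. xs}.
        \<psi>\<^sub>0 s = c\<^sub>0 powr (2 * real k + 3/2) * (xs - s) powr (2 * real k + 1/2) * h s"
    and B_right: "\<forall>s \<in> {xs .. xs + \<epsilon>}. \<psi>\<^sub>0 s = 0"
    and rightmost: "\<forall>y \<in> measure_support \<mu>\<^sub>0. y \<le> xs"
    and tau_pos: "0 < \<tau>"
    and tau_crit: "\<tau> \<le> 1 / (\<integral>s. 1 / (xs - s)\<^sup>2 \<partial>\<mu>\<^sub>0)"
    and conv: "is_free_add_conv \<mu>\<^sub>\<tau> \<mu>\<^sub>0 (semicircle \<tau>)"
  shows "emeasure \<mu>\<^sub>\<tau> {xs + \<tau> * (\<integral>s. 1 / (xs - s) \<partial>\<mu>\<^sub>0) <..} = 0"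
proof -
  have "AE s in \<mu>\<^sub>0. s < xs"
    using A_dens borel_measurable_continuous_onI[OF A_cont] rightmost
    by (rule AE_less_of_density_support_le)
  then interpret semicircle_subordination \<mu>\<^sub>0 \<mu>\<^sub>\<tau> xs \<tau>
    using A_prob tau_pos tau_crit conv by unfold_locales
  show ?thesis
    by (rule emeasure_right_of_edge_eq_0)
qed

end
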